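(* Let $\epsilon,\delta\ge0$ be constants. Suppose that for every $n\ge3$ and every $\frac12$-cyclic point $x\in\mathbb{R}^{E_n}$, the vector $y$ defined by $y_e=\frac32-\epsilon$ for $e\in W_x$, $y_e=\frac34-\delta$ for $e\in H_x$, and $y_e=0$ for $e\notin E_x$ belongs to $\mathrm{TSP}(K_n)$. Then for every $n\ge3$ and every $\frac23$-uniform point $z\in\mathbb{R}^{E_n}$, we have $(\frac32-\frac\epsilon2-\delta)\,z\in\mathrm{TSP}(K_n)$.
   Context: $K_n$ is the complete graph on $V_n=\{1,\dots,n\}$ with edge set $E_n$; $\delta(U)$ denotes the set of edges with exactly one endpoint in $U$. $\mathrm{SUBT}(K_n)=\{x\in[0,1]^{E_n}: x(\delta(\{i\}))=2\ \forall i,\ x(\delta(U))\ge2\ \forall\,\emptyset\ne U\subsetneq V_n\}$. A tour of $K_n$ is a connected, spanning, Eulerian multigraph on $V_n$ with edges (possibly repeated) from $E_n$; $\mathrm{TSP}(K_n)$ is the convex hull of multiplicity vectors of tours. $G_x=(V_n,E_x)$, $E_x=\{e:x_e>0\}$. For $0<\theta\le\frac12$, a $\theta$-cyclic point is $x\in\mathrm{SUBT}(K_n)\cap\{0,\theta,1-\theta,1\}^{E_n}$ such that $G_x$ has maximum degree at most 3 and every vertex is incident to an edge $e$ with $x_e=1$; $W_x=\{e:x_e=1\}$, $H_x=\{e\in E_x:x_e<1\}$. A $\frac23$-uniform point is an $x\in\mathrm{SUBT}(K_n)$ with $x_e\in\{0,\frac23\}$ for all $e$. *)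

theory Defs
  imports Complex_Main
begin

(* Vertices of K_n: V_n = {1..n}; edges: 2-element subsets of V_n.
   Vectors in R^{E_n} are functions  nat set => real  vanishing outside E_n. *)

definition V :: "nat \<Rightarrow> nat set" where
  "V n = {1..n}"

definition E :: "nat \<Rightarrow> nat set set" where
  "E n = {e. e \<subseteq> V n \<and> card e = 2}"

definition cut :: "nat \<Rightarrow> nat set \<Rightarrow> nat set set" where
  "cut n U = {e \<in> E n. card (e \<inter> U) = 1}"

definition SUBT :: "nat \<Rightarrow> (nat set \<Rightarrow> real) set" where
  "SUBT n = {x. (\<forall>e. e \<notin> E n \<longrightarrow> x e = 0)
              \<and> (\<forall>e \<in> E n. 0 \<le> x e \<and> x e \<le> 1)
              \<and> (\<forall>i \<in> V n. sum x (cut n {i}) = 2)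
              \<and> (\<forall>U. U \<noteq> {} \<and> U \<subset> V n \<longrightarrow> sum x (cut n U) \<ge> 2)}"

(* A tour: multiplicity vector m on E_n (a multigraph) that is connected,
   spanning (on V_n) and Eulerian (every vertex has even degree). *)
definition adj :: "nat \<Rightarrow> (nat set \<Rightarrow> nat) \<Rightarrow> (nat \<times> nat) set" where
  "adj n m = {(u, v). {u, v} \<in> E n \<and> m {u, v} > 0}"

definition is_tour :: "nat \<Rightarrow> (nat set \<Rightarrow> nat) \<Rightarrow> bool" where
  "is_tour n m \<longleftrightarrow> (\<forall>e. e \<notin> E n \<longrightarrow> m e = 0)
     \<and> (\<forall>u \<in> V n. \<forall>v \<in> V n. (u, v) \<in> (adj n m)\<^sup>*)
     \<and> (\<forall>i \<in> V n. even (\<Sum>e \<in> cut n {i}. m e))"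

definition TSP :: "nat \<Rightarrow> (nat set \<Rightarrow> real) set" where
  "TSP n = {y. \<exists>k (c :: nat \<Rightarrow> real) (t :: nat \<Rightarrow> nat set \<Rightarrow> nat).
               (\<forall>i < k. 0 \<le> c i \<and> is_tour n (t i))
             \<and> (\<Sum>i<k. c i) = 1
             \<and> (\<forall>e. y e = (\<Sum>i<k. c i * real (t i e)))}"

definition cyclic_point :: "real \<Rightarrow> nat \<Rightarrow> (nat set \<Rightarrow> real) \<Rightarrow> bool" where
  "cyclic_point \<theta> n x \<longleftrightarrow> x \<in> SUBT n
     \<and> (\<forall>e \<in> E n. x e \<in> {0, \<theta>, 1 - \<theta>, 1})
     \<and> (\<forall>i \<in> V n. card {e \<in> cut n {i}. x e > 0} \<le> 3)
     \<and> (\<forall>i \<in> V n. \<exists>e \<in> cut n {i}. x e = 1)"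

definition two_thirds_uniform :: "nat \<Rightarrow> (nat set \<Rightarrow> real) \<Rightarrow> bool" where
  "two_thirds_uniform n z \<longleftrightarrow> z \<in> SUBT n \<and> (\<forall>e \<in> E n. z e \<in> {0, 2/3})"

end

theory Submission
  imports Defs
begin

text \<open>
  The support of a \<open>2/3\<close>-uniform point \<open>z\<close> is a cubic graph on which \<open>z / 2\<close> satisfies
  Edmonds' description of the perfect matching polytope, so \<open>z / 2\<close> is a convex combination of
  perfect matchings \<open>M\<close>. The point that is \<open>1\<close> on \<open>M\<close> and \<open>1/2\<close> on the other support edges is
  \<open>1/2\<close>-cyclic, so the hypothesis puts the associated vector \<open>y\<^sub>M\<close> into \<open>TSP(K\<^sub>n)\<close>; averaging
  the \<open>y\<^sub>M\<close> with the same weights gives \<open>(3/2 - \<epsilon>/2 - \<delta>) z\<close>, because each support edge lies in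
  \<open>M\<close> with probability \<open>1/3\<close>.

  Edmonds' theorem is proved for multigraphs by induction on the number of vertices and edges.
  A zero edge is deleted. Across a tight non-trivial odd cut both sides are shrunk to a vertex,
  and the two distributions of perfect matchings given by induction are coupled through the
  unique cut edge of each matching. Otherwise the point is moved both ways along a nonzero
  vector of the kernel of the incidence map until it becomes degenerate, and it is the convex
  combination of the two degenerate points.
\<close>

definition multigraph :: "'v set \<Rightarrow> 'e set \<Rightarrow> ('e \<Rightarrow> 'v set) \<Rightarrow> bool" where
  "multigraph VV EE ends \<longleftrightarrow>
     finite VV \<and> finite EE \<and> (\<forall>e\<in>EE. ends e \<subseteq> VV \<and> card (ends e) = 2)"

definition incident :: "'e set \<Rightarrow> ('e \<Rightarrow> 'v set) \<Rightarrow> 'v \<Rightarrow> 'e set" where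
  "incident EE ends v = {e\<in>EE. v \<in> ends e}"

definition boundary :: "'e set \<Rightarrow> ('e \<Rightarrow> 'v set) \<Rightarrow> 'v set \<Rightarrow> 'e set" where
  "boundary EE ends U = {e\<in>EE. card (ends e \<inter> U) = 1}"

lemma multigraph_finite:
  assumes "multigraph VV EE ends"
  shows multigraph_finite_vertices: "finite VV" and multigraph_finite_edges: "finite EE"
  using assms unfolding multigraph_def by auto

lemma multigraph_edgeE:
  assumes "multigraph VV EE ends" "e \<in> EE"
  obtains a b where "ends e = {a, b}" "a \<noteq> b" "a \<in> VV" "b \<in> VV"
  using assms unfolding multigraph_def card_2_iff by (metis insert_subset)

lemma multigraph_card_ends: "multigraph VV EE ends \<Longrightarrow> e \<in> EE \<Longrightarrow> card (ends e) = 2"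
  unfolding multigraph_def by auto

lemma multigraph_ends_subset: "multigraph VV EE ends \<Longrightarrow> e \<in> EE \<Longrightarrow> ends e \<subseteq> VV"
  unfolding multigraph_def by auto

lemma multigraph_subgraph:
  "multigraph VV EE ends \<Longrightarrow> VV' \<subseteq> VV \<Longrightarrow> EE' \<subseteq> EE \<Longrightarrow> \<forall>e\<in>EE'. ends e \<subseteq> VV'
    \<Longrightarrow> multigraph VV' EE' ends"
  unfolding multigraph_def by (auto intro: finite_subset)

lemma finite_incident: "finite EE \<Longrightarrow> finite (incident EE ends v)"
  unfolding incident_def by simp

lemma finite_boundary: "finite EE \<Longrightarrow> finite (boundary EE ends U)"
  unfolding boundary_def by simp

lemma incident_Diff: "incident (EE - A) ends v = incident EE ends v - A"
  unfolding incident_def by auto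

lemma boundary_Diff: "boundary (EE - A) ends U = boundary EE ends U - A"
  unfolding boundary_def by auto

lemma boundary_singleton: "boundary EE ends {v} = incident EE ends v"
  unfolding boundary_def incident_def by (auto simp: Int_insert_right)

lemma card_doubleton_Int_eq_1_iff:
  "a \<noteq> b \<Longrightarrow> card ({a, b} \<inter> U) = 1 \<longleftrightarrow> (a \<in> U \<longleftrightarrow> b \<notin> U)"
  by (cases "a \<in> U"; cases "b \<in> U") (auto simp: Int_insert_left)

lemma boundary_complement:
  assumes "multigraph VV EE ends" "U \<subseteq> VV"
  shows "boundary EE ends (VV - U) = boundary EE ends U"
proof -
  have "card (ends e \<inter> (VV - U)) = 1 \<longleftrightarrow> card (ends e \<inter> U) = 1" if e: "e \<in> EE" for e
  proof -
    obtain a b where "ends e = {a, b}" "a \<noteq> b" "a \<in> VV" "b \<in> VV"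
      using assms(1) e by (rule multigraph_edgeE)
    then show ?thesis using card_doubleton_Int_eq_1_iff[of a b] by auto
  qed
  then show ?thesis unfolding boundary_def by auto
qed

lemma sum_incident:
  fixes f :: "'e \<Rightarrow> 'a :: comm_semiring_1"
  assumes "finite U" "finite EE"
  shows "(\<Sum>v\<in>U. sum f (incident EE ends v)) = (\<Sum>e\<in>EE. of_nat (card (ends e \<inter> U)) * f e)"
proof -
  have "(\<Sum>v\<in>U. sum f (incident EE ends v)) = (\<Sum>v\<in>U. \<Sum>e\<in>EE. of_bool (v \<in> ends e) * f e)"
    unfolding incident_def using assms(2) by (simp add: sum.If_cases Int_def)
  also have "\<dots> = (\<Sum>e\<in>EE. (\<Sum>v\<in>U. of_bool (v \<in> ends e)) * f e)"
    by (subst sum.swap) (simp add: sum_distrib_right)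
  also have "\<dots> = (\<Sum>e\<in>EE. of_nat (card (ends e \<inter> U)) * f e)"
    using assms(1) by (simp add: Int_commute Int_def)
  finally show ?thesis .
qed

lemma handshake:
  fixes f :: "'e \<Rightarrow> 'a :: comm_semiring_1"
  assumes "multigraph VV EE ends"
  shows "(\<Sum>v\<in>VV. sum f (incident EE ends v)) = 2 * sum f EE"
proof -
  have "card (ends e \<inter> VV) = 2" if "e \<in> EE" for e
    using assms that by (simp add: multigraph_card_ends multigraph_ends_subset Int_absorb2)
  then show ?thesis
    using assms by (simp add: sum_incident multigraph_finite sum_distrib_left)
qed

lemma even_sum_degrees_iff_even_boundary:
  assumes "multigraph VV EE ends" "finite U"
  shows "even (\<Sum>v\<in>U. card (incident EE ends v)) \<longleftrightarrow> even (card (boundary EE ends U))"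
proof -
  have "(\<Sum>v\<in>U. card (incident EE ends v)) = (\<Sum>e\<in>EE. card (ends e \<inter> U))"
    using sum_incident[of U EE "\<lambda>_. 1::nat" ends] assms by (simp add: multigraph_finite)
  also have "\<dots> = (\<Sum>e\<in>boundary EE ends U. card (ends e \<inter> U))
      + (\<Sum>e\<in>EE - boundary EE ends U. card (ends e \<inter> U))"
    using assms(1) by (simp add: sum.subset_diff[of "boundary EE ends U"] boundary_def multigraph_finite)
  also have "(\<Sum>e\<in>boundary EE ends U. card (ends e \<inter> U)) = card (boundary EE ends U)"
    unfolding boundary_def by simp
  finally have sum_eq: "(\<Sum>v\<in>U. card (incident EE ends v))
      = card (boundary EE ends U) + (\<Sum>e\<in>EE - boundary EE ends U. card (ends e \<inter> U))" .
  have "even (card (ends e \<inter> U))" if "e \<in> EE - boundary EE ends U" for e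
  proof -
    have "card (ends e) = 2" using that assms(1) by (simp add: multigraph_card_ends)
    then have "card (ends e \<inter> U) \<le> 2" by (metis card.infinite card_mono inf_le1 zero_neq_numeral)
    then show ?thesis using that unfolding boundary_def by (auto simp: le_Suc_eq numeral_2_eq_2)
  qed
  then have "even (\<Sum>e\<in>EE - boundary EE ends U. card (ends e \<inter> U))"
    by (intro dvd_sum) auto
  then show ?thesis unfolding sum_eq by simp
qed

section \<open>Edmonds' description of the perfect matching polytope\<close>

definition edmonds_feasible :: "'v set \<Rightarrow> 'e set \<Rightarrow> ('e \<Rightarrow> 'v set) \<Rightarrow> ('e \<Rightarrow> real) \<Rightarrow> bool" where
  "edmonds_feasible VV EE ends x \<longleftrightarrow> (\<forall>e\<in>EE. 0 \<le> x e)
     \<and> (\<forall>v\<in>VV. sum x (incident EE ends v) = 1)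
     \<and> (\<forall>U. U \<subseteq> VV \<longrightarrow> odd (card U) \<longrightarrow> 1 \<le> sum x (boundary EE ends U))"

lemma edmonds_feasibleD:
  assumes "edmonds_feasible VV EE ends x"
  shows edmonds_feasible_nonneg: "e \<in> EE \<Longrightarrow> 0 \<le> x e"
    and edmonds_feasible_degree: "v \<in> VV \<Longrightarrow> sum x (incident EE ends v) = 1"
    and edmonds_feasible_odd_cut: "U \<subseteq> VV \<Longrightarrow> odd (card U) \<Longrightarrow> 1 \<le> sum x (boundary EE ends U)"
  using assms unfolding edmonds_feasible_def by auto

lemma edmonds_feasible_even_card:
  assumes "multigraph VV EE ends" "edmonds_feasible VV EE ends x"
  shows "even (card VV)"
proof (rule ccontr)
  assume "odd (card VV)"
  have "card (ends e \<inter> VV) = 2" if "e \<in> EE" for e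
    using assms(1) that by (simp add: multigraph_card_ends multigraph_ends_subset Int_absorb2)
  then have "boundary EE ends VV = {}" unfolding boundary_def by auto
  then show False using edmonds_feasible_odd_cut[OF assms(2) order_refl \<open>odd (card VV)\<close>] by simp
qed

lemma edmonds_feasible_le_1:
  assumes "multigraph VV EE ends" "edmonds_feasible VV EE ends x" "e \<in> EE"
  shows "x e \<le> 1"
proof -
  obtain a b where ab: "ends e = {a, b}" "a \<in> VV" using assms(1,3) by (metis multigraph_edgeE)
  then have "e \<in> incident EE ends a" using assms(3) unfolding incident_def by auto
  then have "x e \<le> sum x (incident EE ends a)"
    using assms by (intro member_le_sum)
      (auto simp: incident_def edmonds_feasible_nonneg finite_incident multigraph_finite)
  then show ?thesis using edmonds_feasible_degree[OF assms(2) ab(2)] by simp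
qed

lemma edmonds_feasible_degree_ge_2:
  assumes "multigraph VV EE ends" "edmonds_feasible VV EE ends x" "\<forall>e\<in>EE. x e < 1" "v \<in> VV"
  shows "2 \<le> card (incident EE ends v)"
proof (rule ccontr)
  assume "\<not> 2 \<le> card (incident EE ends v)"
  moreover have "finite (incident EE ends v)"
    using assms(1) by (simp add: finite_incident multigraph_finite)
  ultimately have "incident EE ends v = {} \<or> (\<exists>e. incident EE ends v = {e})"
    by (metis One_nat_def card_1_singletonE card_0_eq less_2_cases not_le)
  moreover have "incident EE ends v \<subseteq> EE" unfolding incident_def by auto
  ultimately show False using edmonds_feasible_degree[OF assms(2,4)] assms(3) by fastforce
qed

lemma edmonds_feasible_delete_edge:
  assumes "edmonds_feasible VV EE ends x" "finite EE" "x e0 = 0"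
  shows "edmonds_feasible VV (EE - {e0}) ends x"
proof -
  have "sum x (A - {e0}) = sum x A" if "finite A" for A
    using that assms(3) by (cases "e0 \<in> A") (simp_all add: sum_diff1)
  then show ?thesis
    using assms(1,2) unfolding edmonds_feasible_def incident_Diff boundary_Diff
    by (simp add: finite_incident finite_boundary)
qed

lemma edmonds_feasible_remove_components:
  assumes "edmonds_feasible VV EE ends x" "\<forall>e\<in>F. ends e \<subseteq> R" "\<forall>e\<in>EE - F. ends e \<inter> R = {}"
  shows "edmonds_feasible (VV - R) (EE - F) ends x"
  unfolding edmonds_feasible_def
proof (intro conjI ballI allI impI)
  show "0 \<le> x e" if "e \<in> EE - F" for e
    using that edmonds_feasible_nonneg[OF assms(1)] by simp
  show "sum x (incident (EE - F) ends v) = 1" if "v \<in> VV - R" for v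
  proof -
    have "incident (EE - F) ends v = incident EE ends v"
      using that assms(2) unfolding incident_def by auto
    then show ?thesis using that edmonds_feasible_degree[OF assms(1)] by simp
  qed
  show "1 \<le> sum x (boundary (EE - F) ends U)" if "U \<subseteq> VV - R" "odd (card U)" for U
  proof -
    have "ends e \<inter> U = {}" if "e \<in> F" for e using that \<open>U \<subseteq> VV - R\<close> assms(2) by blast
    then have "boundary (EE - F) ends U = boundary EE ends U" unfolding boundary_def by force
    moreover have "U \<subseteq> VV" using that by blast
    ultimately show ?thesis using that edmonds_feasible_odd_cut[OF assms(1)] by simp
  qed
qed

definition perfect_matching :: "'v set \<Rightarrow> 'e set \<Rightarrow> ('e \<Rightarrow> 'v set) \<Rightarrow> 'e set \<Rightarrow> bool" where
  "perfect_matching VV EE ends M \<longleftrightarrow> M \<subseteq> EE \<and> (\<forall>v\<in>VV. card (incident EE ends v \<inter> M) = 1)"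

definition matching_distribution ::
    "'v set \<Rightarrow> 'e set \<Rightarrow> ('e \<Rightarrow> 'v set) \<Rightarrow> ('e set \<Rightarrow> real) \<Rightarrow> ('e \<Rightarrow> real) \<Rightarrow> bool" where
  "matching_distribution VV EE ends p x \<longleftrightarrow> (\<forall>M. 0 \<le> p M)
     \<and> (\<forall>M\<in>Pow EE. p M \<noteq> 0 \<longrightarrow> perfect_matching VV EE ends M)
     \<and> sum p (Pow EE) = 1
     \<and> (\<forall>e\<in>EE. x e = (\<Sum>M\<in>Pow EE. p M * of_bool (e \<in> M)))"

definition pm_hull :: "'v set \<Rightarrow> 'e set \<Rightarrow> ('e \<Rightarrow> 'v set) \<Rightarrow> ('e \<Rightarrow> real) \<Rightarrow> bool" where
  "pm_hull VV EE ends x \<longleftrightarrow> (\<exists>p. matching_distribution VV EE ends p x)"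

lemma pm_hullE:
  assumes "pm_hull VV EE ends x"
  obtains p where "\<forall>M. 0 \<le> p M" "\<forall>M\<in>Pow EE. p M \<noteq> 0 \<longrightarrow> perfect_matching VV EE ends M"
    "sum p (Pow EE) = 1" "\<forall>e\<in>EE. x e = (\<Sum>M\<in>Pow EE. p M * of_bool (e \<in> M))"
  using assms unfolding pm_hull_def matching_distribution_def by blast

text \<open>Witnesses may be any finite family of perfect matchings, repetitions allowed.\<close>

lemma pm_hullI:
  fixes q :: "'z \<Rightarrow> real"
  assumes "finite EE" "finite Z" "\<forall>z\<in>Z. 0 \<le> q z" "sum q Z = 1" "\<forall>z\<in>Z. \<phi> z \<subseteq> EE"
    "\<forall>z\<in>Z. q z \<noteq> 0 \<longrightarrow> perfect_matching VV EE ends (\<phi> z)"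
    "\<forall>e\<in>EE. x e = (\<Sum>z\<in>Z. q z * of_bool (e \<in> \<phi> z))"
  shows "pm_hull VV EE ends x"
proof -
  define p where "p M = (\<Sum>z\<in>Z. if \<phi> z = M then q z else 0)" for M
  have push: "(\<Sum>M\<in>Pow EE. p M * g M) = (\<Sum>z\<in>Z. q z * g (\<phi> z))" for g :: "_ \<Rightarrow> real"
  proof -
    have "(\<Sum>M\<in>Pow EE. p M * g M) = (\<Sum>z\<in>Z. \<Sum>M\<in>Pow EE. if \<phi> z = M then q z * g M else 0)"
      unfolding p_def sum_distrib_right by (subst sum.swap) (intro sum.cong refl, simp)
    also have "\<dots> = (\<Sum>z\<in>Z. q z * g (\<phi> z))"
      using assms(1,5) by (intro sum.cong refl) (simp add: sum.delta')
    finally show ?thesis .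
  qed
  have "matching_distribution VV EE ends p x"
    unfolding matching_distribution_def
  proof (intro conjI allI ballI impI)
    show "0 \<le> p M" for M unfolding p_def using assms(3) by (auto intro: sum_nonneg)
    show "perfect_matching VV EE ends M" if "M \<in> Pow EE" "p M \<noteq> 0" for M
    proof -
      obtain z where "z \<in> Z" "\<phi> z = M" "q z \<noteq> 0"
        using \<open>p M \<noteq> 0\<close> unfolding p_def by (smt (verit) sum.neutral)
      then show ?thesis using assms(6) by auto
    qed
    show "sum p (Pow EE) = 1" using push[of "\<lambda>_. 1"] assms(4) by simp
    show "x e = (\<Sum>M\<in>Pow EE. p M * of_bool (e \<in> M))" if "e \<in> EE" for e
      using push[of "\<lambda>M. of_bool (e \<in> M)"] assms(7) that by simp
  qed
  then show ?thesis unfolding pm_hull_def by blast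
qed

lemma pm_hull_convex:
  assumes "pm_hull VV EE ends x1" "pm_hull VV EE ends x2" "0 \<le> l" "l \<le> 1"
    "\<forall>e\<in>EE. x e = l * x1 e + (1 - l) * x2 e"
  shows "pm_hull VV EE ends x"
proof -
  obtain p1 where p1: "\<forall>M. 0 \<le> p1 M" "\<forall>M\<in>Pow EE. p1 M \<noteq> 0 \<longrightarrow> perfect_matching VV EE ends M"
    "sum p1 (Pow EE) = 1" "\<forall>e\<in>EE. x1 e = (\<Sum>M\<in>Pow EE. p1 M * of_bool (e \<in> M))"
    using assms(1) by (rule pm_hullE)
  obtain p2 where p2: "\<forall>M. 0 \<le> p2 M" "\<forall>M\<in>Pow EE. p2 M \<noteq> 0 \<longrightarrow> perfect_matching VV EE ends M"
    "sum p2 (Pow EE) = 1" "\<forall>e\<in>EE. x2 e = (\<Sum>M\<in>Pow EE. p2 M * of_bool (e \<in> M))"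
    using assms(2) by (rule pm_hullE)
  have "matching_distribution VV EE ends (\<lambda>M. l * p1 M + (1 - l) * p2 M) x"
    unfolding matching_distribution_def
  proof (intro conjI allI ballI impI)
    show "0 \<le> l * p1 M + (1 - l) * p2 M" for M using p1(1) p2(1) assms(3,4) by simp
    show "perfect_matching VV EE ends M" if "M \<in> Pow EE" "l * p1 M + (1 - l) * p2 M \<noteq> 0" for M
      using that p1(2) p2(2) by (cases "p1 M = 0") auto
    show "(\<Sum>M\<in>Pow EE. l * p1 M + (1 - l) * p2 M) = 1"
      using p1(3) p2(3) by (simp add: sum.distrib sum_distrib_left[symmetric])
    show "x e = (\<Sum>M\<in>Pow EE. (l * p1 M + (1 - l) * p2 M) * of_bool (e \<in> M))" if "e \<in> EE" for e
      using that p1(4) p2(4) assms(5)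
      by (simp add: distrib_right sum.distrib mult.assoc sum_distrib_left[symmetric]
          del: sum_mult_of_bool_eq)
  qed
  then show ?thesis unfolding pm_hull_def by blast
qed

lemma pm_hull_empty: "multigraph {} EE ends \<Longrightarrow> pm_hull {} EE ends x"
  unfolding pm_hull_def matching_distribution_def
  by (intro exI[of _ "\<lambda>M. of_bool (M = {})"]) (auto simp: perfect_matching_def multigraph_def)

lemma pm_hull_single_edge:
  assumes "EE = {e}" "ends e = VV" "card VV = 2" "x e = 1"
  shows "pm_hull VV EE ends x"
  unfolding pm_hull_def matching_distribution_def
  by (intro exI[of _ "\<lambda>M. of_bool (M = EE)"]) (use assms in \<open>auto simp: perfect_matching_def incident_def\<close>)

lemma perfect_matching_mono:
  assumes "perfect_matching VV EE' ends M" "EE' \<subseteq> EE"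
  shows "perfect_matching VV EE ends M"
proof -
  have "M \<subseteq> EE'" using assms(1) unfolding perfect_matching_def by simp
  then have "incident EE ends v \<inter> M = incident EE' ends v \<inter> M" for v
    using assms(2) unfolding incident_def by blast
  then show ?thesis using assms \<open>M \<subseteq> EE'\<close> unfolding perfect_matching_def by simp
qed

lemma pm_hull_delete_edge:
  assumes "finite EE" "x e0 = 0" "pm_hull VV (EE - {e0}) ends x"
  shows "pm_hull VV EE ends x"
proof -
  obtain p where p: "\<forall>M. 0 \<le> p M"
    "\<forall>M\<in>Pow (EE - {e0}). p M \<noteq> 0 \<longrightarrow> perfect_matching VV (EE - {e0}) ends M"
    "sum p (Pow (EE - {e0})) = 1" "\<forall>e\<in>EE - {e0}. x e = (\<Sum>M\<in>Pow (EE - {e0}). p M * of_bool (e \<in> M))"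
    using assms(3) by (rule pm_hullE)
  have xval: "x e = (\<Sum>M\<in>Pow (EE - {e0}). p M * of_bool (e \<in> M))" if "e \<in> EE" for e
  proof (cases "e = e0")
    case True
    have "(\<Sum>M\<in>Pow (EE - {e0}). p M * of_bool (e0 \<in> M)) = 0" by (intro sum.neutral) auto
    then show ?thesis using True assms(2) by simp
  qed (use that p(4) in auto)
  show ?thesis
  proof (rule pm_hullI[where Z = "Pow (EE - {e0})" and q = p and \<phi> = id])
    show "\<forall>M\<in>Pow (EE - {e0}). p M \<noteq> 0 \<longrightarrow> perfect_matching VV EE ends (id M)"
      using p(2) perfect_matching_mono[of VV "EE - {e0}" ends _ EE] by auto
  qed (use assms(1) p xval in auto)
qed

lemma sum_product_pairs:
  "(\<Sum>z\<in>A \<times> B. f (fst z) * g (snd z)) = sum f A * (sum g B :: 'a :: comm_semiring_0)"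
  by (simp add: sum_product sum.cartesian_product case_prod_beta)

lemma perfect_matching_Un_components:
  assumes "F \<subseteq> EE" "\<forall>e\<in>F. ends e \<subseteq> R" "\<forall>e\<in>EE - F. ends e \<inter> R = {}"
    "perfect_matching (VV - R) (EE - F) ends A" "perfect_matching R F ends B"
  shows "perfect_matching VV EE ends (A \<union> B)"
proof -
  have "card (incident EE ends v \<inter> (A \<union> B)) = 1" if "v \<in> VV" for v
  proof (cases "v \<in> R")
    case True
    then have "incident EE ends v \<inter> (A \<union> B) = incident F ends v \<inter> B"
      using assms unfolding perfect_matching_def incident_def by auto
    then show ?thesis using assms(5) True unfolding perfect_matching_def by auto
  next
    case False
    then have "incident EE ends v \<inter> (A \<union> B) = incident (EE - F) ends v \<inter> A"
      using assms unfolding perfect_matching_def incident_def by auto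
    then show ?thesis using assms(4) False that unfolding perfect_matching_def by auto
  qed
  then show ?thesis using assms unfolding perfect_matching_def by auto
qed

lemma pm_hull_Un_components:
  assumes "finite EE" "F \<subseteq> EE" "\<forall>e\<in>F. ends e \<subseteq> R" "\<forall>e\<in>EE - F. ends e \<inter> R = {}"
    "pm_hull (VV - R) (EE - F) ends x" "pm_hull R F ends x"
  shows "pm_hull VV EE ends x"
proof -
  obtain p1 where p1: "\<forall>M. 0 \<le> p1 M" "\<forall>M\<in>Pow (EE - F). p1 M \<noteq> 0 \<longrightarrow> perfect_matching (VV - R) (EE - F) ends M"
    "sum p1 (Pow (EE - F)) = 1" "\<forall>e\<in>EE - F. x e = (\<Sum>M\<in>Pow (EE - F). p1 M * of_bool (e \<in> M))"
    using assms(5) by (rule pm_hullE)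
  obtain p2 where p2: "\<forall>M. 0 \<le> p2 M" "\<forall>M\<in>Pow F. p2 M \<noteq> 0 \<longrightarrow> perfect_matching R F ends M"
    "sum p2 (Pow F) = 1" "\<forall>e\<in>F. x e = (\<Sum>M\<in>Pow F. p2 M * of_bool (e \<in> M))"
    using assms(6) by (rule pm_hullE)
  have finF: "finite F" using assms(1,2) by (rule finite_subset[rotated])
  have "x e = (\<Sum>z\<in>Pow (EE - F) \<times> Pow F. p1 (fst z) * p2 (snd z) * of_bool (e \<in> fst z \<union> snd z))"
    if "e \<in> EE" for e
  proof (cases "e \<in> F")
    case True
    then have "(\<Sum>z\<in>Pow (EE - F) \<times> Pow F. p1 (fst z) * p2 (snd z) * of_bool (e \<in> fst z \<union> snd z))
        = (\<Sum>z\<in>Pow (EE - F) \<times> Pow F. p1 (fst z) * (p2 (snd z) * of_bool (e \<in> snd z)))"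
      by (intro sum.cong refl) auto
    also have "\<dots> = sum p1 (Pow (EE - F)) * (\<Sum>M\<in>Pow F. p2 M * of_bool (e \<in> M))"
      by (rule sum_product_pairs)
    finally show ?thesis using p1(3) p2(4) True by simp
  next
    case False
    then have "(\<Sum>z\<in>Pow (EE - F) \<times> Pow F. p1 (fst z) * p2 (snd z) * of_bool (e \<in> fst z \<union> snd z))
        = (\<Sum>z\<in>Pow (EE - F) \<times> Pow F. (p1 (fst z) * of_bool (e \<in> fst z)) * p2 (snd z))"
      by (intro sum.cong refl) auto
    also have "\<dots> = (\<Sum>M\<in>Pow (EE - F). p1 M * of_bool (e \<in> M)) * sum p2 (Pow F)"
      by (rule sum_product_pairs)
    finally show ?thesis using p2(3) p1(4) False that by simp
  qed
  moreover have "perfect_matching VV EE ends (A \<union> B)"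
    if "(A, B) \<in> Pow (EE - F) \<times> Pow F" "p1 A * p2 B \<noteq> 0" for A B
    using that p1(2) p2(2) assms(2-4) by (intro perfect_matching_Un_components) auto
  ultimately show ?thesis
    using assms(1,2) finF p1 p2
    by (intro pm_hullI[where Z = "Pow (EE - F) \<times> Pow F" and q = "\<lambda>z. p1 (fst z) * p2 (snd z)"
          and \<phi> = "\<lambda>z. fst z \<union> snd z"]) (auto simp: sum_product_pairs)
qed

section \<open>Shrinking the complement of a vertex set\<close>

text \<open>The shrunk graph keeps the vertices of \<open>U\<close>, identifies all other vertices with one
  vertex \<open>w\<close>, and drops the edges having no end in \<open>U\<close>; parallel edges survive as such.\<close>

definition shrink_vertex :: "'v set \<Rightarrow> 'v \<Rightarrow> 'v \<Rightarrow> 'v" where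
  "shrink_vertex U w v = (if v \<in> U then v else w)"

definition shrink_edges :: "'e set \<Rightarrow> ('e \<Rightarrow> 'v set) \<Rightarrow> 'v set \<Rightarrow> 'e set" where
  "shrink_edges EE ends U = {e\<in>EE. ends e \<inter> U \<noteq> {}}"

definition shrink_ends :: "('e \<Rightarrow> 'v set) \<Rightarrow> 'v set \<Rightarrow> 'v \<Rightarrow> 'e \<Rightarrow> 'v set" where
  "shrink_ends ends U w e = shrink_vertex U w ` ends e"

context
  fixes VV :: "'v set" and EE :: "'e set" and ends U w
  assumes G: "multigraph VV EE ends" and U: "U \<subseteq> VV" and w: "w \<in> VV" "w \<notin> U"
begin

lemma shrink_ends_doubleton:
  "ends e = {a, b} \<Longrightarrow> shrink_ends ends U w e = {shrink_vertex U w a, shrink_vertex U w b}"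
  unfolding shrink_ends_def by simp

lemma shrink_vertex_inj:
  "a \<noteq> b \<Longrightarrow> a \<in> U \<or> b \<in> U \<Longrightarrow> shrink_vertex U w a \<noteq> shrink_vertex U w b"
  using w unfolding shrink_vertex_def by auto

lemma multigraph_shrink: "multigraph (insert w U) (shrink_edges EE ends U) (shrink_ends ends U w)"
  unfolding multigraph_def
proof (intro conjI ballI)
  show "finite (insert w U)" using G U by (simp add: finite_subset multigraph_finite)
  show "finite (shrink_edges EE ends U)" using G by (simp add: shrink_edges_def multigraph_finite)
  fix e assume e: "e \<in> shrink_edges EE ends U"
  then obtain a b where ab: "ends e = {a, b}" "a \<noteq> b"
    unfolding shrink_edges_def by (metis (no_types, lifting) G mem_Collect_eq multigraph_edgeE)
  have "a \<in> U \<or> b \<in> U" using e ab unfolding shrink_edges_def by auto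
  then show "card (shrink_ends ends U w e) = 2"
    using shrink_vertex_inj[OF ab(2)] by (simp add: shrink_ends_doubleton[OF ab(1)])
  show "shrink_ends ends U w e \<subseteq> insert w U"
    unfolding shrink_ends_def shrink_vertex_def by auto
qed

lemma incident_shrink_inside:
  assumes "v \<in> U"
  shows "incident (shrink_edges EE ends U) (shrink_ends ends U w) v = incident EE ends v"
proof -
  have "v \<in> shrink_vertex U w ` A \<longleftrightarrow> v \<in> A" for A
    using assms w unfolding shrink_vertex_def by (auto simp: image_iff)
  then show ?thesis using assms unfolding incident_def shrink_edges_def shrink_ends_def by blast
qed

lemma incident_shrink_new_vertex:
  "incident (shrink_edges EE ends U) (shrink_ends ends U w) w = boundary EE ends U"
proof -
  have "e \<in> incident (shrink_edges EE ends U) (shrink_ends ends U w) w \<longleftrightarrow> e \<in> boundary EE ends U"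
    if e: "e \<in> EE" for e
  proof -
    obtain a b where ab: "ends e = {a, b}" "a \<noteq> b" using G e by (rule multigraph_edgeE)
    have "w = shrink_vertex U w v \<longleftrightarrow> v \<notin> U" for v using w unfolding shrink_vertex_def by auto
    then show ?thesis
      using e ab card_doubleton_Int_eq_1_iff[OF ab(2), of U]
      unfolding incident_def shrink_edges_def boundary_def by (auto simp: shrink_ends_doubleton)
  qed
  then show ?thesis unfolding incident_def boundary_def shrink_edges_def by blast
qed

lemma boundary_shrink:
  assumes S: "S \<subseteq> insert w U"
  shows "boundary (shrink_edges EE ends U) (shrink_ends ends U w) S
    = boundary EE ends (if w \<in> S then S - {w} \<union> (VV - U) else S)"
proof -
  define T where "T = (if w \<in> S then S - {w} \<union> (VV - U) else S)"
  have T: "shrink_vertex U w v \<in> S \<longleftrightarrow> v \<in> T" if "v \<in> VV" for v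
    using that S w unfolding shrink_vertex_def T_def by auto
  have "e \<in> boundary (shrink_edges EE ends U) (shrink_ends ends U w) S \<longleftrightarrow> e \<in> boundary EE ends T"
    if e: "e \<in> EE" for e
  proof -
    obtain a b where ab: "ends e = {a, b}" "a \<noteq> b" "a \<in> VV" "b \<in> VV" using G e by (rule multigraph_edgeE)
    have boundary_T: "e \<in> boundary EE ends T \<longleftrightarrow> (a \<in> T \<longleftrightarrow> b \<notin> T)"
      using e card_doubleton_Int_eq_1_iff[OF ab(2), of T] by (simp add: boundary_def ab(1))
    show ?thesis
    proof (cases "a \<in> U \<or> b \<in> U")
      case True
      then have "e \<in> shrink_edges EE ends U" using e ab(1) unfolding shrink_edges_def by auto
      then have "e \<in> boundary (shrink_edges EE ends U) (shrink_ends ends U w) S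
          \<longleftrightarrow> (shrink_vertex U w a \<in> S \<longleftrightarrow> shrink_vertex U w b \<notin> S)"
        using card_doubleton_Int_eq_1_iff[OF shrink_vertex_inj[OF ab(2) True], of S]
        by (simp add: boundary_def shrink_ends_doubleton[OF ab(1)])
      then show ?thesis unfolding boundary_T T[OF ab(3)] T[OF ab(4)] .
    next
      case False
      then have "e \<notin> shrink_edges EE ends U" using ab(1) unfolding shrink_edges_def by auto
      then have "e \<notin> boundary (shrink_edges EE ends U) (shrink_ends ends U w) S"
        unfolding boundary_def by simp
      moreover have "a \<in> T \<longleftrightarrow> b \<in> T"
        using False T[OF ab(3)] T[OF ab(4)] unfolding shrink_vertex_def by auto
      ultimately show ?thesis using boundary_T by simp
    qed
  qed
  then show ?thesis unfolding boundary_def shrink_edges_def T_def by blast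
qed

lemma edmonds_feasible_shrink:
  assumes F: "edmonds_feasible VV EE ends x" and odd_U: "odd (card U)"
    and tight: "sum x (boundary EE ends U) = 1"
  shows "edmonds_feasible (insert w U) (shrink_edges EE ends U) (shrink_ends ends U w) x"
  unfolding edmonds_feasible_def
proof (intro conjI ballI allI impI)
  show "0 \<le> x e" if "e \<in> shrink_edges EE ends U" for e
    using that edmonds_feasible_nonneg[OF F] unfolding shrink_edges_def by auto
  show "sum x (incident (shrink_edges EE ends U) (shrink_ends ends U w) v) = 1" if "v \<in> insert w U" for v
    using that tight edmonds_feasible_degree[OF F] U
    by (auto simp: incident_shrink_new_vertex incident_shrink_inside)
  fix S assume S: "S \<subseteq> insert w U" "odd (card S)"
  define T where "T = (if w \<in> S then S - {w} \<union> (VV - U) else S)"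
  have finite: "finite VV" "finite S" using G S(1) U by (auto simp: multigraph_finite finite_subset)
  have "odd (card T)"
  proof (cases "w \<in> S")
    case True
    have "card T = card (S - {w} \<union> (VV - U))" unfolding T_def using True by simp
    also have "\<dots> = card (S - {w}) + card (VV - U)"
      using S(1) finite by (intro card_Un_disjoint) auto
    finally have "card T = card (S - {w}) + card (VV - U)" .
    moreover have "card (S - {w}) + 1 = card S" using card_Suc_Diff1[OF finite(2) True] by simp
    moreover have "card (VV - U) + card U = card VV"
      using U finite by (metis card_Diff_subset card_mono finite_subset le_add_diff_inverse2)
    moreover have "even (card VV)" using edmonds_feasible_even_card[OF G F] .
    ultimately show ?thesis using odd_U S(2) by presburger
  qed (use S(2) T_def in simp)
  moreover have "T \<subseteq> VV" using S U w unfolding T_def by auto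
  ultimately show "1 \<le> sum x (boundary (shrink_edges EE ends U) (shrink_ends ends U w) S)"
    unfolding boundary_shrink[OF S(1)] T_def[symmetric] using edmonds_feasible_odd_cut[OF F] by simp
qed

lemma card_shrink_less:
  assumes "2 \<le> card (VV - U)"
  shows "card (insert w U) + card (shrink_edges EE ends U) < card VV + card EE"
proof -
  have "card (insert w U) = card U + 1" using w U G by (simp add: finite_subset multigraph_finite)
  moreover have "card U + card (VV - U) = card VV"
    using U G by (metis card_Diff_subset card_mono finite_subset le_add_diff_inverse multigraph_finite)
  moreover have "card (shrink_edges EE ends U) \<le> card EE"
    using G unfolding shrink_edges_def by (intro card_mono) (auto simp: multigraph_finite)
  ultimately show ?thesis using assms by linarith
qed

end

section \<open>Gluing along a tight odd cut\<close>

lemma sum_pairs: "(\<Sum>z\<in>A \<times> B. f z) = (\<Sum>a\<in>A. \<Sum>b\<in>B. f (a, b))"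
  by (simp add: sum.cartesian_product)

lemma coupling_marginal:
  fixes p1 p2 :: "'f set \<Rightarrow> real" and x :: "'f \<Rightarrow> real"
  assumes "finite P2" "finite D"
    and one: "\<forall>A\<in>P1. p1 A \<noteq> 0 \<longrightarrow> card (D \<inter> A) = 1"
    and x: "\<forall>f\<in>D. x f \<noteq> 0 \<and> x f = (\<Sum>B\<in>P2. p2 B * of_bool (f \<in> B))"
  shows "(\<Sum>A\<in>P1. \<Sum>B\<in>P2. p1 A * p2 B * (\<Sum>f\<in>D. of_bool (f \<in> A \<and> f \<in> B) / x f) * h A)
    = (\<Sum>A\<in>P1. p1 A * h A)"
proof -
  have inner: "(\<Sum>B\<in>P2. p2 B * (\<Sum>f\<in>D. of_bool (f \<in> A \<and> f \<in> B) / x f)) = card (D \<inter> A)" for A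
  proof -
    have "(\<Sum>B\<in>P2. p2 B * (\<Sum>f\<in>D. of_bool (f \<in> A \<and> f \<in> B) / x f))
        = (\<Sum>f\<in>D. \<Sum>B\<in>P2. p2 B * (of_bool (f \<in> A \<and> f \<in> B) / x f))"
      by (simp add: sum_distrib_left sum.swap[of _ P2])
    also have "\<dots> = (\<Sum>f\<in>D. of_bool (f \<in> A) / x f * (\<Sum>B\<in>P2. p2 B * of_bool (f \<in> B)))"
      by (intro sum.cong refl) (auto simp: sum_distrib_left intro!: sum.cong)
    also have "\<dots> = (\<Sum>f\<in>D. of_bool (f \<in> A))" using x by (intro sum.cong) auto
    also have "\<dots> = card (D \<inter> A)" using assms(2) by (simp add: Int_def)
    finally show ?thesis .
  qed
  have "(\<Sum>A\<in>P1. \<Sum>B\<in>P2. p1 A * p2 B * (\<Sum>f\<in>D. of_bool (f \<in> A \<and> f \<in> B) / x f) * h A)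
      = (\<Sum>A\<in>P1. p1 A * h A * (\<Sum>B\<in>P2. p2 B * (\<Sum>f\<in>D. of_bool (f \<in> A \<and> f \<in> B) / x f)))"
    by (simp add: sum_distrib_left mult_ac)
  also have "\<dots> = (\<Sum>A\<in>P1. p1 A * h A)"
    unfolding inner using one by (intro sum.cong) auto
  finally show ?thesis .
qed

text \<open>The coupling conditions on the common element: \<open>q (A, B) = p1 A * p2 B / x f\<close> when
  \<open>D \<inter> A = D \<inter> B = {f}\<close>, and \<open>0\<close> otherwise.\<close>

lemma coupling_through_common_element:
  fixes p1 p2 :: "'f set \<Rightarrow> real" and x :: "'f \<Rightarrow> real"
  assumes fin: "finite P1" "finite P2" "finite D" and nonneg: "\<forall>A. 0 \<le> p1 A" "\<forall>B. 0 \<le> p2 B"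
    and one1: "\<forall>A\<in>P1. p1 A \<noteq> 0 \<longrightarrow> card (D \<inter> A) = 1"
    and one2: "\<forall>B\<in>P2. p2 B \<noteq> 0 \<longrightarrow> card (D \<inter> B) = 1"
    and x: "\<forall>f\<in>D. 0 < x f \<and> x f = (\<Sum>A\<in>P1. p1 A * of_bool (f \<in> A))
      \<and> x f = (\<Sum>B\<in>P2. p2 B * of_bool (f \<in> B))"
  obtains q :: "'f set \<times> 'f set \<Rightarrow> real"
  where "\<forall>z. 0 \<le> q z"
    and "\<And>h. (\<Sum>z\<in>P1 \<times> P2. q z * h (fst z)) = (\<Sum>A\<in>P1. p1 A * h A)"
    and "\<And>h. (\<Sum>z\<in>P1 \<times> P2. q z * h (snd z)) = (\<Sum>B\<in>P2. p2 B * h B)"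
    and "\<forall>z\<in>P1 \<times> P2. q z \<noteq> 0 \<longrightarrow> p1 (fst z) \<noteq> 0 \<and> p2 (snd z) \<noteq> 0 \<and> D \<inter> fst z = D \<inter> snd z"
proof
  define g where "g A B = (\<Sum>f\<in>D. of_bool (f \<in> A \<and> f \<in> B) / x f)" for A B
  define q where "q z = p1 (fst z) * p2 (snd z) * g (fst z) (snd z)" for z
  show "\<forall>z. 0 \<le> q z"
    using nonneg x unfolding q_def g_def by (auto intro!: sum_nonneg mult_nonneg_nonneg simp: less_imp_le)
  show "(\<Sum>z\<in>P1 \<times> P2. q z * h (fst z)) = (\<Sum>A\<in>P1. p1 A * h A)" for h
    unfolding q_def g_def sum_pairs fst_conv snd_conv
    by (rule coupling_marginal) (use fin one1 x in auto)
  show "(\<Sum>z\<in>P1 \<times> P2. q z * h (snd z)) = (\<Sum>B\<in>P2. p2 B * h B)" for h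
  proof -
    have "(\<Sum>z\<in>P1 \<times> P2. q z * h (snd z))
        = (\<Sum>B\<in>P2. \<Sum>A\<in>P1. p2 B * p1 A * (\<Sum>f\<in>D. of_bool (f \<in> B \<and> f \<in> A) / x f) * h B)"
      unfolding q_def g_def sum_pairs fst_conv snd_conv by (subst sum.swap) (simp add: mult_ac conj_commute)
    also have "\<dots> = (\<Sum>B\<in>P2. p2 B * h B)"
      by (rule coupling_marginal) (use fin one2 x in auto)
    finally show ?thesis .
  qed
  show "\<forall>z\<in>P1 \<times> P2. q z \<noteq> 0 \<longrightarrow> p1 (fst z) \<noteq> 0 \<and> p2 (snd z) \<noteq> 0 \<and> D \<inter> fst z = D \<inter> snd z"
  proof (intro ballI impI)
    fix z assume z: "z \<in> P1 \<times> P2" "q z \<noteq> 0"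
    then have p: "p1 (fst z) \<noteq> 0" "p2 (snd z) \<noteq> 0" and "g (fst z) (snd z) \<noteq> 0"
      unfolding q_def by auto
    then obtain f where "f \<in> D" "f \<in> fst z" "f \<in> snd z"
      unfolding g_def using sum.neutral[of D "\<lambda>f. of_bool (f \<in> fst z \<and> f \<in> snd z) / x f"] by auto
    moreover have "card (D \<inter> fst z) = 1" "card (D \<inter> snd z) = 1" using z p one1 one2 by auto
    ultimately show "p1 (fst z) \<noteq> 0 \<and> p2 (snd z) \<noteq> 0 \<and> D \<inter> fst z = D \<inter> snd z"
      using p by (metis IntI card_1_singletonE singletonD)
  qed
qed

context
  fixes VV :: "'v set" and EE :: "'e set" and ends U
  assumes G: "multigraph VV EE ends" and U: "U \<subseteq> VV"
begin

lemma shrink_edges_Int_complement: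
  "shrink_edges EE ends U \<inter> shrink_edges EE ends (VV - U) = boundary EE ends U"
proof -
  have "ends e \<inter> U \<noteq> {} \<and> ends e \<inter> (VV - U) \<noteq> {} \<longleftrightarrow> card (ends e \<inter> U) = 1" if e: "e \<in> EE" for e
  proof -
    obtain a b where ab: "ends e = {a, b}" "a \<noteq> b" "a \<in> VV" "b \<in> VV" using G e by (rule multigraph_edgeE)
    show ?thesis using card_doubleton_Int_eq_1_iff[OF ab(2), of U] ab by auto
  qed
  then show ?thesis unfolding shrink_edges_def boundary_def by auto
qed

lemma shrink_edges_Un_complement:
  "shrink_edges EE ends U \<union> shrink_edges EE ends (VV - U) = EE"
  using G unfolding shrink_edges_def by (fastforce elim: multigraph_edgeE)

lemma incident_Un_other_side:
  assumes "v \<in> U" "B \<subseteq> shrink_edges EE ends (VV - U)" "boundary EE ends U \<inter> B \<subseteq> A"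
  shows "incident EE ends v \<inter> (A \<union> B) = incident EE ends v \<inter> A"
proof -
  have "e \<in> A" if "e \<in> B" "e \<in> incident EE ends v" for e
  proof -
    have "e \<in> shrink_edges EE ends U" using that assms(1) unfolding incident_def shrink_edges_def by auto
    then show ?thesis using that assms(2,3) shrink_edges_Int_complement by auto
  qed
  then show ?thesis by auto
qed

end

lemma perfect_matching_glue:
  assumes G: "multigraph VV EE ends" and U: "U \<subseteq> VV" and w: "w \<in> VV - U" and u: "u \<in> U"
    and A: "perfect_matching (insert w U) (shrink_edges EE ends U) (shrink_ends ends U w) A"
    and B: "perfect_matching (insert u (VV - U)) (shrink_edges EE ends (VV - U)) (shrink_ends ends (VV - U) u) B"
    and AB: "boundary EE ends U \<inter> A = boundary EE ends U \<inter> B"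
  shows "perfect_matching VV EE ends (A \<union> B)"
proof -
  have U': "VV - U \<subseteq> VV" "u \<in> VV" "u \<notin> VV - U" "VV - (VV - U) = U" using U u by auto
  have AE: "A \<subseteq> shrink_edges EE ends U" and BE: "B \<subseteq> shrink_edges EE ends (VV - U)"
    using A B unfolding perfect_matching_def by auto
  have "card (incident EE ends v \<inter> (A \<union> B)) = 1" if v: "v \<in> VV" for v
  proof (cases "v \<in> U")
    case True
    have "incident EE ends v \<inter> (A \<union> B) = incident EE ends v \<inter> A"
      using incident_Un_other_side[OF G U True BE] AB by auto
    then show ?thesis
      using A True incident_shrink_inside[OF G U _ _ True] w unfolding perfect_matching_def by auto
  next
    case False
    then have v': "v \<in> VV - U" using v by simp
    have "incident EE ends v \<inter> (B \<union> A) = incident EE ends v \<inter> B"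
      using incident_Un_other_side[OF G U'(1) v', of A B] AE AB boundary_complement[OF G U] U'(4)
      by auto
    moreover have "card (incident (shrink_edges EE ends (VV - U)) (shrink_ends ends (VV - U) u) v \<inter> B) = 1"
      using B v' unfolding perfect_matching_def by blast
    ultimately show ?thesis
      using incident_shrink_inside[OF G U'(1-3) v'] by (simp add: Un_commute)
  qed
  then show ?thesis using AE BE unfolding perfect_matching_def shrink_edges_def by auto
qed

lemma sum_coupling_Un:
  fixes q :: "'f set \<times> 'f set \<Rightarrow> real"
  assumes "\<forall>z\<in>P1 \<times> P2. q z \<noteq> 0 \<longrightarrow> D \<inter> fst z = D \<inter> snd z"
    "\<forall>A\<in>P1. A \<subseteq> E1" "\<forall>B\<in>P2. B \<subseteq> E2" "E1 \<inter> E2 = D"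
  shows "e \<in> E1 \<Longrightarrow> (\<Sum>z\<in>P1 \<times> P2. q z * of_bool (e \<in> fst z \<union> snd z))
      = (\<Sum>z\<in>P1 \<times> P2. q z * of_bool (e \<in> fst z))"
    and "e \<in> E2 \<Longrightarrow> (\<Sum>z\<in>P1 \<times> P2. q z * of_bool (e \<in> fst z \<union> snd z))
      = (\<Sum>z\<in>P1 \<times> P2. q z * of_bool (e \<in> snd z))"
proof -
  have agree: "q z = 0 \<or> (e \<in> fst z \<longleftrightarrow> e \<in> snd z)" if "z \<in> P1 \<times> P2" "e \<in> E1" "e \<in> E2" for z
    using assms(1)[rule_format, OF that(1)] assms(4) that(2,3) by blast
  have sides: "fst z \<subseteq> E1" "snd z \<subseteq> E2" if "z \<in> P1 \<times> P2" for z
    using that assms(2,3) by (auto simp: mem_Times_iff)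
  show "(\<Sum>z\<in>P1 \<times> P2. q z * of_bool (e \<in> fst z \<union> snd z))
      = (\<Sum>z\<in>P1 \<times> P2. q z * of_bool (e \<in> fst z))" if e: "e \<in> E1"
  proof (intro sum.cong refl)
    fix z assume z: "z \<in> P1 \<times> P2"
    show "q z * of_bool (e \<in> fst z \<union> snd z) = q z * of_bool (e \<in> fst z)"
      using agree[OF z e] sides[OF z] by (cases "e \<in> E2") auto
  qed
  show "(\<Sum>z\<in>P1 \<times> P2. q z * of_bool (e \<in> fst z \<union> snd z))
      = (\<Sum>z\<in>P1 \<times> P2. q z * of_bool (e \<in> snd z))" if e: "e \<in> E2"
  proof (intro sum.cong refl)
    fix z assume z: "z \<in> P1 \<times> P2"
    show "q z * of_bool (e \<in> fst z \<union> snd z) = q z * of_bool (e \<in> snd z)"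
      using agree[OF z _ e] sides[OF z] by (cases "e \<in> E1") auto
  qed
qed

lemma card_boundary_Int_shrink_matching:
  assumes "multigraph VV EE ends" "U \<subseteq> VV" "w \<in> VV" "w \<notin> U"
    and "perfect_matching (insert w U) (shrink_edges EE ends U) (shrink_ends ends U w) A"
  shows "card (boundary EE ends U \<inter> A) = 1"
  using assms(5) incident_shrink_new_vertex[OF assms(1-4)] unfolding perfect_matching_def by auto

lemma pm_hull_glue:
  assumes G: "multigraph VV EE ends" and U: "U \<subseteq> VV" and w: "w \<in> VV - U" and u: "u \<in> U"
    and tight: "sum x (boundary EE ends U) = 1" and pos: "\<forall>f\<in>boundary EE ends U. 0 < x f"
    and h1: "pm_hull (insert w U) (shrink_edges EE ends U) (shrink_ends ends U w) x"
    and h2: "pm_hull (insert u (VV - U)) (shrink_edges EE ends (VV - U)) (shrink_ends ends (VV - U) u) x"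
  shows "pm_hull VV EE ends x"
proof -
  define D where "D = boundary EE ends U"
  define E1 where "E1 = shrink_edges EE ends U"
  define E2 where "E2 = shrink_edges EE ends (VV - U)"
  have U': "VV - U \<subseteq> VV" "u \<in> VV" "u \<notin> VV - U" and w': "w \<in> VV" "w \<notin> U" using U u w by auto
  have E12: "E1 \<inter> E2 = D" "E1 \<union> E2 = EE"
    unfolding D_def E1_def E2_def using shrink_edges_Int_complement[OF G U] shrink_edges_Un_complement[OF G U] .
  then have fin: "finite E1" "finite E2" "finite D" using multigraph_finite_edges[OF G] by auto
  obtain p1 where p1: "\<forall>M. 0 \<le> p1 M"
    "\<forall>M\<in>Pow E1. p1 M \<noteq> 0 \<longrightarrow> perfect_matching (insert w U) E1 (shrink_ends ends U w) M"
    "sum p1 (Pow E1) = 1" "\<forall>e\<in>E1. x e = (\<Sum>M\<in>Pow E1. p1 M * of_bool (e \<in> M))"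
    using h1 unfolding E1_def by (rule pm_hullE)
  obtain p2 where p2: "\<forall>M. 0 \<le> p2 M"
    "\<forall>M\<in>Pow E2. p2 M \<noteq> 0 \<longrightarrow> perfect_matching (insert u (VV - U)) E2 (shrink_ends ends (VV - U) u) M"
    "sum p2 (Pow E2) = 1" "\<forall>e\<in>E2. x e = (\<Sum>M\<in>Pow E2. p2 M * of_bool (e \<in> M))"
    using h2 unfolding E2_def by (rule pm_hullE)
  have one1: "\<forall>A\<in>Pow E1. p1 A \<noteq> 0 \<longrightarrow> card (D \<inter> A) = 1"
    using p1(2) card_boundary_Int_shrink_matching[OF G U w'] unfolding D_def E1_def by blast
  have one2: "\<forall>B\<in>Pow E2. p2 B \<noteq> 0 \<longrightarrow> card (D \<inter> B) = 1"
    using p2(2) card_boundary_Int_shrink_matching[OF G U'] boundary_complement[OF G U]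
    unfolding D_def E2_def by auto
  have xD: "\<forall>f\<in>D. 0 < x f \<and> x f = (\<Sum>A\<in>Pow E1. p1 A * of_bool (f \<in> A))
      \<and> x f = (\<Sum>B\<in>Pow E2. p2 B * of_bool (f \<in> B))"
    using pos p1(4) p2(4) E12 unfolding D_def by auto
  obtain q where q: "\<forall>z. 0 \<le> q z"
    "\<And>h. (\<Sum>z\<in>Pow E1 \<times> Pow E2. q z * h (fst z)) = (\<Sum>A\<in>Pow E1. p1 A * h A)"
    "\<And>h. (\<Sum>z\<in>Pow E1 \<times> Pow E2. q z * h (snd z)) = (\<Sum>B\<in>Pow E2. p2 B * h B)"
    "\<forall>z\<in>Pow E1 \<times> Pow E2. q z \<noteq> 0 \<longrightarrow> p1 (fst z) \<noteq> 0 \<and> p2 (snd z) \<noteq> 0 \<and> D \<inter> fst z = D \<inter> snd z"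
    by (rule coupling_through_common_element[OF _ _ fin(3) p1(1) p2(1) one1 one2 xD]) (use fin in simp_all)
  have "x e = (\<Sum>z\<in>Pow E1 \<times> Pow E2. q z * of_bool (e \<in> fst z \<union> snd z))" if "e \<in> EE" for e
    using that E12 p1(4) p2(4) q(2)[of "\<lambda>A. of_bool (e \<in> A)"] q(3)[of "\<lambda>B. of_bool (e \<in> B)"]
      sum_coupling_Un[of "Pow E1" "Pow E2" q D E1 E2] q(4)
    by (cases "e \<in> E1") auto
  moreover have "perfect_matching VV EE ends (fst z \<union> snd z)"
    if z: "z \<in> Pow E1 \<times> Pow E2" "q z \<noteq> 0" for z
  proof -
    have "p1 (fst z) \<noteq> 0" "p2 (snd z) \<noteq> 0" "D \<inter> fst z = D \<inter> snd z"
      using q(4)[rule_format, OF z] by auto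
    then show ?thesis
      using z(1) p1(2) p2(2) by (intro perfect_matching_glue[OF G U w u]) (auto simp: D_def E1_def E2_def)
  qed
  ultimately show ?thesis
    using q(1) q(2)[of "\<lambda>_. 1"] p1(3) fin E12 G
    by (intro pm_hullI[where Z = "Pow E1 \<times> Pow E2" and q = q and \<phi> = "\<lambda>z. fst z \<union> snd z"])
      (auto simp: multigraph_finite)
qed

section \<open>Perturbing a non-degenerate point\<close>

lemma homogeneous_system_nontrivial_solution:
  fixes a :: "'v \<Rightarrow> 'e \<Rightarrow> real"
  assumes "finite VV" "finite EE" "card VV < card EE"
  shows "\<exists>d. (\<exists>e\<in>EE. d e \<noteq> 0) \<and> (\<forall>v\<in>VV. (\<Sum>e\<in>EE. a v e * d e) = 0)"
  using assms
proof (induction VV arbitrary: EE a rule: finite_induct)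
  case empty
  then have "EE \<noteq> {}" by auto
  then show ?case by (intro exI[of _ "\<lambda>_. 1"]) auto
next
  case (insert v0 VV)
  show ?case
  proof (cases "\<forall>e\<in>EE. a v0 e = 0")
    case True
    have "card VV < card EE" using insert by simp
    then obtain d where "\<exists>e\<in>EE. d e \<noteq> 0" "\<forall>v\<in>VV. (\<Sum>e\<in>EE. a v e * d e) = 0"
      using insert.IH[OF insert.prems(1)] by blast
    then show ?thesis using True by (intro exI[of _ d]) auto
  next
    case False
    then obtain e0 where e0: "e0 \<in> EE" "a v0 e0 \<noteq> 0" by blast
    define EE' where "EE' = EE - {e0}"
    text \<open>Gaussian elimination of the unknown \<open>e0\<close> using the equation of \<open>v0\<close>.\<close>
    define a' where "a' v e = a v e - a v e0 * a v0 e / a v0 e0" for v e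
    have "card VV < card EE'" using insert e0 unfolding EE'_def by simp
    then obtain d' where d': "\<exists>e\<in>EE'. d' e \<noteq> 0" "\<forall>v\<in>VV. (\<Sum>e\<in>EE'. a' v e * d' e) = 0"
      using insert.IH[of EE' a'] insert.prems(1) unfolding EE'_def by auto
    define S where "S = (\<Sum>e\<in>EE'. a v0 e * d' e)"
    define d where "d e = (if e = e0 then - S / a v0 e0 else d' e)" for e
    have "(\<Sum>e\<in>EE'. a v e * d e) = (\<Sum>e\<in>EE'. a v e * d' e)" for v
      unfolding d_def EE'_def by (intro sum.cong refl) auto
    then have split: "(\<Sum>e\<in>EE. a v e * d e) = a v e0 * d e0 + (\<Sum>e\<in>EE'. a v e * d' e)" for v
      unfolding EE'_def by (simp only: sum.remove[OF insert.prems(1) e0(1)])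
    have "(\<Sum>e\<in>EE. a v e * d e) = 0" if "v \<in> insert v0 VV" for v
    proof (cases "v = v0")
      case True
      then have "(\<Sum>e\<in>EE. a v e * d e) = a v0 e0 * d e0 + S" using split[of v0] unfolding S_def by simp
      then show ?thesis using e0(2) unfolding d_def by simp
    next
      case False
      then have "(\<Sum>e\<in>EE'. a v e * d' e) - a v e0 / a v0 e0 * S = 0"
        using that d'(2) unfolding a'_def S_def
        by (simp add: sum_subtractf sum_distrib_left algebra_simps sum_divide_distrib)
      then show ?thesis unfolding split by (simp add: d_def)
    qed
    moreover have "\<exists>e\<in>EE. d e \<noteq> 0" using d'(1) unfolding d_def EE'_def by auto
    ultimately show ?thesis by blast
  qed
qed

lemma max_feasible_step:
  fixes a b :: "'i \<Rightarrow> real"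
  assumes "finite I" "\<forall>i\<in>I. 0 < a i" "\<exists>i\<in>I. b i < 0"
  obtains t where "0 < t" "\<forall>i\<in>I. 0 \<le> a i + t * b i" "\<exists>i\<in>I. a i + t * b i = 0"
proof -
  define R where "R = (\<lambda>i. a i / - b i) ` {i\<in>I. b i < 0}"
  define t where "t = Min R"
  have R: "finite R" "R \<noteq> {}" unfolding R_def using assms(1,3) by auto
  obtain i0 where i0: "i0 \<in> I" "b i0 < 0" "t = a i0 / - b i0"
    using Min_in[OF R] unfolding t_def R_def by auto
  have "0 < t" using i0 assms(2) by (simp add: divide_pos_neg)
  have "0 \<le> a i + t * b i" if "i \<in> I" for i
  proof (cases "b i < 0")
    case True
    then have "a i / - b i \<in> R" unfolding R_def using that by auto
    then have "t \<le> a i / - b i" unfolding t_def by (rule Min_le[OF R(1)])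
    then show ?thesis using True by (simp add: field_simps)
  next
    case False
    then show ?thesis using that assms(2) \<open>0 < t\<close> by (simp add: add_nonneg_nonneg less_imp_le)
  qed
  moreover note \<open>0 < t\<close>
  moreover have "a i0 + t * b i0 = 0" using i0 by (simp add: field_simps)
  ultimately show ?thesis using that i0(1) by blast
qed

definition balanced_direction :: "'v set \<Rightarrow> 'e set \<Rightarrow> ('e \<Rightarrow> 'v set) \<Rightarrow> ('e \<Rightarrow> real) \<Rightarrow> bool" where
  "balanced_direction VV EE ends d \<longleftrightarrow>
     (\<exists>e\<in>EE. d e \<noteq> 0) \<and> (\<forall>v\<in>VV. sum d (incident EE ends v) = 0)"

definition nontrivial_cut :: "'v set \<Rightarrow> 'v set \<Rightarrow> bool" where
  "nontrivial_cut VV U \<longleftrightarrow> 2 \<le> card U \<and> 2 \<le> card (VV - U)"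

definition degenerate :: "'v set \<Rightarrow> 'e set \<Rightarrow> ('e \<Rightarrow> 'v set) \<Rightarrow> ('e \<Rightarrow> real) \<Rightarrow> bool" where
  "degenerate VV EE ends x \<longleftrightarrow> (\<exists>e\<in>EE. x e = 0) \<or>
     (\<exists>U. U \<subseteq> VV \<and> odd (card U) \<and> nontrivial_cut VV U \<and> sum x (boundary EE ends U) = 1)"

lemma balanced_direction_uminus:
  "balanced_direction VV EE ends d \<Longrightarrow> balanced_direction VV EE ends (\<lambda>e. - d e)"
  unfolding balanced_direction_def by (simp add: sum_negf)

lemma balanced_direction_has_negative:
  assumes "multigraph VV EE ends" "balanced_direction VV EE ends d"
  shows "\<exists>e\<in>EE. d e < 0"
proof (rule ccontr)
  assume "\<not> (\<exists>e\<in>EE. d e < 0)"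
  moreover have "sum d EE = 0"
    using handshake[OF assms(1), of d] assms(2) unfolding balanced_direction_def by simp
  ultimately have "\<forall>e\<in>EE. d e = 0"
    using sum_nonneg_eq_0_iff[OF multigraph_finite_edges[OF assms(1)]] by (meson not_le)
  then show False using assms(2) unfolding balanced_direction_def by blast
qed

lemma sum_boundary_trivial_cut:
  assumes G: "multigraph VV EE ends" and ev: "even (card VV)"
    and d: "\<forall>v\<in>VV. sum d (incident EE ends v) = 0"
    and U: "U \<subseteq> VV" "odd (card U)" "\<not> nontrivial_cut VV U"
  shows "sum d (boundary EE ends U) = 0"
proof -
  have "card U + card (VV - U) = card VV"
    using U(1) G by (metis card_Diff_subset card_mono finite_subset le_add_diff_inverse multigraph_finite)
  then have "card U = 1 \<or> card (VV - U) = 1" using U(2,3) ev unfolding nontrivial_cut_def by presburger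
  then obtain v where "v \<in> VV" "U = {v} \<or> VV - U = {v}" using U(1) by (metis card_1_singletonE insert_subset Diff_subset)
  then show ?thesis
    using d boundary_complement[OF G U(1)] by (auto simp: boundary_singleton)
qed

lemma sum_perturb: "(\<Sum>e\<in>A. x e + t * d e) = sum x A + t * sum d A" for t :: real
  by (simp only: sum.distrib sum_distrib_left)

text \<open>Along a balanced direction the degree constraints and the trivial odd cut constraints are
  unchanged, so only edges and non-trivial odd cuts can become violated.\<close>

lemma edmonds_feasible_perturb:
  assumes G: "multigraph VV EE ends" and F: "edmonds_feasible VV EE ends x"
    and d: "\<forall>v\<in>VV. sum d (incident EE ends v) = 0"
    and edge: "\<forall>e\<in>EE. 0 \<le> x e + t * d e"
    and cut: "\<forall>U. U \<subseteq> VV \<and> odd (card U) \<and> nontrivial_cut VV U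
      \<longrightarrow> 1 \<le> sum x (boundary EE ends U) + t * sum d (boundary EE ends U)"
  shows "edmonds_feasible VV EE ends (\<lambda>e. x e + t * d e)"
  unfolding edmonds_feasible_def sum_perturb
proof (intro conjI ballI allI impI)
  show "0 \<le> x e + t * d e" if "e \<in> EE" for e using edge that by blast
  show "sum x (incident EE ends v) + t * sum d (incident EE ends v) = 1" if "v \<in> VV" for v
    using that d edmonds_feasible_degree[OF F] by simp
  show "1 \<le> sum x (boundary EE ends U) + t * sum d (boundary EE ends U)"
    if "U \<subseteq> VV" "odd (card U)" for U
  proof (cases "nontrivial_cut VV U")
    case False
    have "sum d (boundary EE ends U) = 0"
      using sum_boundary_trivial_cut[OF G edmonds_feasible_even_card[OF G F] d that False] .
    then show ?thesis using edmonds_feasible_odd_cut[OF F that] by simp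
  qed (use cut that in blast)
qed

lemma edmonds_feasible_perturb_to_degenerate:
  assumes G: "multigraph VV EE ends" and F: "edmonds_feasible VV EE ends x"
    and nondeg: "\<not> degenerate VV EE ends x" and d: "balanced_direction VV EE ends d"
  obtains t where "0 < t" "edmonds_feasible VV EE ends (\<lambda>e. x e + t * d e)"
    "degenerate VV EE ends (\<lambda>e. x e + t * d e)"
proof -
  define C where "C = {U. U \<subseteq> VV \<and> odd (card U) \<and> nontrivial_cut VV U}"
  define a where "a = case_sum x (\<lambda>U. sum x (boundary EE ends U) - 1)"
  define b where "b = case_sum d (\<lambda>U. sum d (boundary EE ends U))"
  have "finite (Inl ` EE \<union> Inr ` C)" using G unfolding C_def by (simp add: multigraph_finite)
  moreover have "\<forall>i\<in>Inl ` EE \<union> Inr ` C. 0 < a i"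
    using nondeg F unfolding a_def C_def degenerate_def edmonds_feasible_def
    by (auto simp: less_le)
  moreover have "\<exists>i\<in>Inl ` EE \<union> Inr ` C. b i < 0"
    using balanced_direction_has_negative[OF G d] unfolding b_def by force
  ultimately obtain t where t: "0 < t" "\<forall>i\<in>Inl ` EE \<union> Inr ` C. 0 \<le> a i + t * b i"
    "\<exists>i\<in>Inl ` EE \<union> Inr ` C. a i + t * b i = 0"
    by (rule max_feasible_step)
  have "\<forall>e\<in>EE. 0 \<le> x e + t * d e"
    using t(2) unfolding a_def b_def by (metis Un_iff image_eqI sum.case(1))
  moreover have "\<forall>U. U \<subseteq> VV \<and> odd (card U) \<and> nontrivial_cut VV U
      \<longrightarrow> 1 \<le> sum x (boundary EE ends U) + t * sum d (boundary EE ends U)"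
  proof (intro allI impI)
    fix U assume "U \<subseteq> VV \<and> odd (card U) \<and> nontrivial_cut VV U"
    then show "1 \<le> sum x (boundary EE ends U) + t * sum d (boundary EE ends U)"
      using t(2)[rule_format, of "Inr U"] unfolding a_def b_def C_def by simp
  qed
  ultimately have "edmonds_feasible VV EE ends (\<lambda>e. x e + t * d e)"
    using d unfolding balanced_direction_def by (intro edmonds_feasible_perturb[OF G F]) auto
  moreover have "degenerate VV EE ends (\<lambda>e. x e + t * d e)"
  proof -
    obtain i where "i \<in> Inl ` EE \<union> Inr ` C" "a i + t * b i = 0" using t(3) by blast
    then consider e where "e \<in> EE" "x e + t * d e = 0"
      | U where "U \<in> C" "sum x (boundary EE ends U) + t * sum d (boundary EE ends U) = 1"
      unfolding a_def b_def by (auto simp: algebra_simps)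
    then show ?thesis unfolding degenerate_def sum_perturb C_def by cases auto
  qed
  ultimately show ?thesis using that t(1) by blast
qed

lemma pm_hull_between:
  assumes "pm_hull VV EE ends (\<lambda>e. x e + t1 * d e)" "pm_hull VV EE ends (\<lambda>e. x e + t2 * - d e)"
    "0 < t1" "0 < t2"
  shows "pm_hull VV EE ends x"
proof (rule pm_hull_convex[OF assms(1,2)])
  define l where "l = t2 / (t1 + t2)"
  have "1 - l = t1 / (t1 + t2)" using assms(3,4) unfolding l_def by (simp add: field_simps)
  then have "l * (x e + t1 * d e) + (1 - l) * (x e + t2 * - d e)
      = (t2 * (x e + t1 * d e) + t1 * (x e + t2 * - d e)) / (t1 + t2)" for e
    unfolding l_def by (simp add: add_divide_distrib)
  also have "(t2 * (x e + t1 * d e) + t1 * (x e + t2 * - d e)) / (t1 + t2) = x e" for e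
    using assms(3,4) by (simp add: field_simps)
  finally show "\<forall>e\<in>EE. x e = l * (x e + t1 * d e) + (1 - l) * (x e + t2 * - d e)" by simp
  show "0 \<le> l" "l \<le> 1" using assms(3,4) unfolding l_def by auto
qed

lemma balanced_direction_of_card_less:
  fixes EE :: "'e set"
  assumes "multigraph VV EE ends" "card VV < card EE"
  shows "\<exists>d. balanced_direction VV EE ends d"
proof -
  have fin: "finite VV" "finite EE" using assms(1) by (auto simp: multigraph_finite)
  obtain d :: "'e \<Rightarrow> real" where "\<exists>e\<in>EE. d e \<noteq> 0" "\<forall>v\<in>VV. (\<Sum>e\<in>EE. of_bool (v \<in> ends e) * d e) = 0"
    using homogeneous_system_nontrivial_solution[OF fin assms(2), of "\<lambda>v e. of_bool (v \<in> ends e)"]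
    by blast
  moreover have "sum d (incident EE ends v) = (\<Sum>e\<in>EE. of_bool (v \<in> ends e) * d e)" for v
    unfolding incident_def using fin(2) by (simp add: sum.If_cases Int_def)
  ultimately show ?thesis unfolding balanced_direction_def by auto
qed

lemma two_regular_of_min_degree:
  assumes G: "multigraph VV EE ends" and deg: "\<forall>v\<in>VV. 2 \<le> card (incident EE ends v)"
    and card: "card EE \<le> card VV"
  shows "\<forall>v\<in>VV. card (incident EE ends v) = 2"
proof -
  have "(\<Sum>v\<in>VV. card (incident EE ends v)) = 2 * card EE"
    using handshake[OF G, of "\<lambda>_. 1::nat"] by simp
  also have "\<dots> \<le> (\<Sum>v\<in>VV. 2)" using card by simp
  finally have eq: "(\<Sum>v\<in>VV. 2) = (\<Sum>v\<in>VV. card (incident EE ends v))"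
    using deg sum_mono[of VV "\<lambda>_. 2" "\<lambda>v. card (incident EE ends v)"] by simp
  show ?thesis
    using sum_mono_inv[OF eq] deg multigraph_finite_vertices[OF G] by simp
qed

text \<open>Off \<open>1/2\<close>, at every vertex of a 2-regular graph one edge has weight \<open>a\<close> and the
  other \<open>1 - a\<close>.\<close>

lemma balanced_direction_two_regular_not_half:
  fixes EE :: "'e set"
  assumes F: "edmonds_feasible VV EE ends x" and deg: "\<forall>v\<in>VV. card (incident EE ends v) = 2"
    and e0: "e0 \<in> EE" "x e0 \<noteq> 1/2"
  shows "\<exists>d. balanced_direction VV EE ends d"
proof -
  define d :: "'e \<Rightarrow> real" where "d e = of_bool (x e = x e0) - of_bool (x e = 1 - x e0)" for e
  have "sum d (incident EE ends v) = 0" if v: "v \<in> VV" for v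
  proof -
    obtain e1 e2 where e12: "incident EE ends v = {e1, e2}" "e1 \<noteq> e2"
      using deg v unfolding card_2_iff by blast
    then have "x e1 + x e2 = 1" using edmonds_feasible_degree[OF F v] by simp
    then show ?thesis using e12(2) e0(2) unfolding e12(1) d_def by auto
  qed
  moreover have "d e0 \<noteq> 0" using e0(2) unfolding d_def by auto
  ultimately show ?thesis using e0(1) unfolding balanced_direction_def by blast
qed

lemma sum_incident_indicator:
  "finite EE \<Longrightarrow> a \<in> EE \<Longrightarrow> (\<Sum>e\<in>incident EE ends y. of_bool (e = a) :: real) = of_bool (y \<in> ends a)"
  by (simp add: of_bool_def sum.delta finite_incident incident_def)

lemma balanced_direction_closed_walk:
  assumes "finite EE" "e1 \<in> EE" "e2 \<in> EE" "e3 \<in> EE" "e4 \<in> EE" "e1 \<noteq> e2" "e1 \<noteq> e4"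
    and "ends e1 = {p, q}" "ends e2 = {q, r}" "ends e3 = {r, s}" "ends e4 = {s, p}"
    and "p \<noteq> q" "q \<noteq> r" "r \<noteq> s" "s \<noteq> p"
  shows "balanced_direction VV EE ends
    (\<lambda>e. of_bool (e = e1) - of_bool (e = e2) + of_bool (e = e3) - of_bool (e = e4))"
proof -
  have "sum (\<lambda>e. of_bool (e = e1) - of_bool (e = e2) + of_bool (e = e3) - of_bool (e = e4))
      (incident EE ends y) = (0::real)" for y
    using assms by (simp add: sum.distrib sum_subtractf sum_incident_indicator)
  moreover have "of_bool (e1 = e1) - of_bool (e1 = e2) + of_bool (e1 = e3) - of_bool (e1 = e4) \<noteq> (0::real)"
    using assms(6,7) by simp
  ultimately show ?thesis using assms(2) unfolding balanced_direction_def by blast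
qed

lemma card_2_otherE:
  assumes "card A = 2" "a \<in> A"
  obtains b where "A = {a, b}" "b \<noteq> a"
  using assms by (auto simp: card_2_iff doubleton_eq_iff)

text \<open>In the all-\<open>1/2\<close> case the path \<open>u - v - w\<close> spans a tight odd cut, so non-degeneracy
  leaves a single vertex outside it, which closes the path to a 4-cycle.\<close>

lemma two_regular_half_path_closes:
  assumes G: "multigraph VV EE ends" and F: "edmonds_feasible VV EE ends x"
    and half: "\<forall>e\<in>EE. x e = 1/2" and nondeg: "\<not> degenerate VV EE ends x"
    and v: "incident EE ends v = {e1, e2}" "v \<in> VV"
    and u: "incident EE ends u = {e1, e0}" "e0 \<noteq> e1" "ends e1 = {v, u}" "u \<noteq> v"
    and w: "incident EE ends w = {e2, e3}" "e3 \<noteq> e2" "ends e2 = {v, w}" "w \<noteq> v" "u \<noteq> w"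
  obtains s where "ends e0 = {u, s}" "ends e3 = {w, s}" "s \<noteq> u" "s \<noteq> w"
proof -
  have E: "e0 \<in> EE" "e1 \<in> EE" "e2 \<in> EE" "e3 \<in> EE" "u \<in> ends e0" "w \<in> ends e3"
    using u(1) v(1) w(1) unfolding incident_def by auto
  have "e0 \<noteq> e2" "e3 \<noteq> e1" using E u w by auto
  define U where "U = {u, v, w}"
  have U: "U \<subseteq> VV" "card U = 3"
    using v(2) E G u w unfolding U_def by (auto dest: multigraph_ends_subset)
  have "boundary EE ends U \<subseteq> {e0, e3}"
  proof
    fix e assume e: "e \<in> boundary EE ends U"
    then have "ends e \<inter> U \<noteq> {}" unfolding boundary_def by force
    then have "e \<in> incident EE ends u \<union> incident EE ends v \<union> incident EE ends w"
      using e unfolding boundary_def incident_def U_def by auto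
    moreover have "e \<noteq> e1" "e \<noteq> e2" using e u(3) w(3) u(4) w(4,5)
      unfolding boundary_def U_def by (auto simp: insert_commute)
    ultimately show "e \<in> {e0, e3}" using u(1) v(1) w(1) by auto
  qed
  then have "sum x (boundary EE ends U) \<le> sum x {e0, e3}"
    using E(1,4) half by (intro sum_mono2) auto
  moreover have "1 \<le> sum x (boundary EE ends U)" using edmonds_feasible_odd_cut[OF F U(1)] U(2) by simp
  ultimately have "e0 \<noteq> e3" and tight: "sum x (boundary EE ends U) = 1"
    using E(1,4) half by (cases "e0 = e3"; simp)+
  then have "\<not> nontrivial_cut VV U" using nondeg U unfolding degenerate_def by auto
  then have card: "card (VV - U) \<le> 1" using U(2) unfolding nontrivial_cut_def by simp
  obtain s where s: "ends e0 = {u, s}" "s \<noteq> u"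
    using multigraph_card_ends[OF G E(1)] E(5) by (rule card_2_otherE)
  obtain t where t: "ends e3 = {w, t}" "t \<noteq> w"
    using multigraph_card_ends[OF G E(4)] E(6) by (rule card_2_otherE)
  have "e0 \<notin> incident EE ends v" "e0 \<notin> incident EE ends w"
    "e3 \<notin> incident EE ends v" "e3 \<notin> incident EE ends u"
    using v(1) u(1,2) w(1,2) \<open>e0 \<noteq> e2\<close> \<open>e3 \<noteq> e1\<close> \<open>e0 \<noteq> e3\<close> by auto
  then have "s \<in> VV - U" "t \<in> VV - U"
    using s t E(1,4) multigraph_ends_subset[OF G E(1)] multigraph_ends_subset[OF G E(4)]
    unfolding U_def incident_def by auto
  then have "s = t"
    using card G by (metis card_le_Suc0_iff_eq finite_Diff multigraph_finite_vertices One_nat_def)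
  then show ?thesis using that s t by auto
qed

lemma balanced_direction_two_regular_half:
  assumes G: "multigraph VV EE ends" and F: "edmonds_feasible VV EE ends x"
    and deg: "\<forall>v\<in>VV. card (incident EE ends v) = 2"
    and half: "\<forall>e\<in>EE. x e = 1/2" and nondeg: "\<not> degenerate VV EE ends x" and v: "v \<in> VV"
  shows "\<exists>d. balanced_direction VV EE ends d"
proof -
  obtain e1 e2 where e12: "incident EE ends v = {e1, e2}" "e1 \<noteq> e2"
    using deg v unfolding card_2_iff by blast
  have E: "e1 \<in> EE" "e2 \<in> EE" "v \<in> ends e1" "v \<in> ends e2" using e12(1) unfolding incident_def by auto
  obtain u where u: "ends e1 = {v, u}" "u \<noteq> v"
    using multigraph_card_ends[OF G E(1)] E(3) by (rule card_2_otherE)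
  obtain w where w: "ends e2 = {v, w}" "w \<noteq> v"
    using multigraph_card_ends[OF G E(2)] E(4) by (rule card_2_otherE)
  have V: "u \<in> VV" "w \<in> VV" "e1 \<in> incident EE ends u" "e2 \<in> incident EE ends w"
    using multigraph_ends_subset[OF G] E u w unfolding incident_def by auto
  have fin: "finite EE" using G by (rule multigraph_finite_edges)
  show ?thesis
  proof (cases "u = w")
    case True
    show ?thesis
      using balanced_direction_closed_walk[OF fin E(1,2,1,2) e12(2) e12(2), of ends u v u v] u w True
      by (auto simp: insert_commute)
  next
    case False
    obtain e0 where e0: "incident EE ends u = {e1, e0}" "e0 \<noteq> e1"
      using deg V(1,3) by (metis card_2_otherE)
    obtain e3 where e3: "incident EE ends w = {e2, e3}" "e3 \<noteq> e2"
      using deg V(2,4) by (metis card_2_otherE)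
    obtain s where s: "ends e0 = {u, s}" "ends e3 = {w, s}" "s \<noteq> u" "s \<noteq> w"
      using two_regular_half_path_closes[OF G F half nondeg e12(1) v e0 u(1,2) e3 w(1,2) False] .
    have "e0 \<in> EE" "e3 \<in> EE" using e0(1) e3(1) unfolding incident_def by auto
    then show ?thesis
      using balanced_direction_closed_walk[OF fin E(1,2) \<open>e3 \<in> EE\<close> \<open>e0 \<in> EE\<close> e12(2) e0(2)[symmetric],
          of ends u v w s] u w s False
      by (auto simp: insert_commute)
  qed
qed

lemma balanced_direction_exists:
  assumes G: "multigraph VV EE ends" and F: "edmonds_feasible VV EE ends x"
    and lt1: "\<forall>e\<in>EE. x e < 1" and nondeg: "\<not> degenerate VV EE ends x" and V: "VV \<noteq> {}"
  shows "\<exists>d. balanced_direction VV EE ends d"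
proof (cases "card VV < card EE")
  case True
  then show ?thesis by (rule balanced_direction_of_card_less[OF G])
next
  case False
  then have deg: "\<forall>v\<in>VV. card (incident EE ends v) = 2"
    using edmonds_feasible_degree_ge_2[OF G F lt1] by (intro two_regular_of_min_degree[OF G]) auto
  show ?thesis
  proof (cases "\<forall>e\<in>EE. x e = 1/2")
    case True
    then show ?thesis using balanced_direction_two_regular_half[OF G F deg _ nondeg] V by blast
  next
    case False
    then show ?thesis using balanced_direction_two_regular_not_half[OF F deg] by blast
  qed
qed

section \<open>Edmonds' perfect matching polytope theorem\<close>

text \<open>The lemmas below with premise \<open>IH\<close> are induction steps on \<open>card VV + card EE\<close>; the
  induction hypothesis is passed as that premise.\<close>

lemma pm_hull_tight_cut:
  fixes VV :: "'v set" and EE :: "'e set"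
  assumes IH: "\<And>VV' EE' (ends' :: 'e \<Rightarrow> 'v set) x'. card VV' + card EE' < card VV + card EE \<Longrightarrow>
      multigraph VV' EE' ends' \<Longrightarrow> edmonds_feasible VV' EE' ends' x' \<Longrightarrow> pm_hull VV' EE' ends' x'"
    and G: "multigraph VV EE ends" and F: "edmonds_feasible VV EE ends x"
    and pos: "\<forall>e\<in>EE. 0 < x e"
    and U: "U \<subseteq> VV" "odd (card U)" "nontrivial_cut VV U" and tight: "sum x (boundary EE ends U) = 1"
  shows "pm_hull VV EE ends x"
proof -
  have card: "2 \<le> card (VV - U)" "2 \<le> card (VV - (VV - U))"
    using U(1,3) unfolding nontrivial_cut_def by (simp_all add: double_diff)
  then have "VV - U \<noteq> {}" "U \<noteq> {}" using U(1) by (auto simp: double_diff)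
  then obtain w u where wu: "w \<in> VV - U" "u \<in> U" by blast
  have U': "VV - U \<subseteq> VV" "u \<in> VV" "u \<notin> VV - U" and w: "w \<in> VV" "w \<notin> U" using U(1) wu by auto
  have "card (VV - U) = card VV - card U" "card U \<le> card VV"
    using U(1) multigraph_finite_vertices[OF G] by (simp_all add: card_Diff_subset finite_subset card_mono)
  then have "odd (card (VV - U))" using U(2) edmonds_feasible_even_card[OF G F] by simp
  moreover have "sum x (boundary EE ends (VV - U)) = 1" using tight boundary_complement[OF G U(1)] by simp
  ultimately have "pm_hull (insert u (VV - U)) (shrink_edges EE ends (VV - U)) (shrink_ends ends (VV - U) u) x"
    by (intro IH card_shrink_less[OF G U' card(2)] multigraph_shrink[OF G U']
        edmonds_feasible_shrink[OF G U' F])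
  moreover have "pm_hull (insert w U) (shrink_edges EE ends U) (shrink_ends ends U w) x"
    by (intro IH card_shrink_less[OF G U(1) w card(1)] multigraph_shrink[OF G U(1) w]
        edmonds_feasible_shrink[OF G U(1) w F U(2) tight])
  moreover have "\<forall>f\<in>boundary EE ends U. 0 < x f" using pos by (simp add: boundary_def)
  ultimately show ?thesis using pm_hull_glue[OF G U(1) wu tight] by blast
qed

lemma pm_hull_degenerate:
  fixes VV :: "'v set" and EE :: "'e set"
  assumes IH: "\<And>VV' EE' (ends' :: 'e \<Rightarrow> 'v set) x'. card VV' + card EE' < card VV + card EE \<Longrightarrow>
      multigraph VV' EE' ends' \<Longrightarrow> edmonds_feasible VV' EE' ends' x' \<Longrightarrow> pm_hull VV' EE' ends' x'"
    and G: "multigraph VV EE ends" and F: "edmonds_feasible VV EE ends x"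
    and deg: "degenerate VV EE ends x"
  shows "pm_hull VV EE ends x"
proof (cases "\<exists>e\<in>EE. x e = 0")
  case True
  then obtain e0 where e0: "e0 \<in> EE" "x e0 = 0" by blast
  have fin: "finite EE" using G by (rule multigraph_finite_edges)
  have "card VV + card (EE - {e0}) < card VV + card EE"
    using card_Diff1_less[OF fin e0(1)] by simp
  moreover have "multigraph VV (EE - {e0}) ends"
    using G by (rule multigraph_subgraph) (auto dest: multigraph_ends_subset[OF G])
  moreover have "edmonds_feasible VV (EE - {e0}) ends x" using F fin e0(2) by (rule edmonds_feasible_delete_edge)
  ultimately have "pm_hull VV (EE - {e0}) ends x" by (rule IH)
  then show ?thesis by (rule pm_hull_delete_edge[of EE x e0, OF fin e0(2)])
next
  case False
  then have pos: "\<forall>e\<in>EE. 0 < x e" using edmonds_feasible_nonneg[OF F] by (auto simp: less_le)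
  obtain U where U: "U \<subseteq> VV" "odd (card U)" "nontrivial_cut VV U" "sum x (boundary EE ends U) = 1"
    using deg False unfolding degenerate_def by blast
  show ?thesis by (rule pm_hull_tight_cut[OF _ G F pos U]) (rule IH)
qed

text \<open>An edge of weight \<open>1\<close> between two vertices of degree \<open>1\<close> is a connected component.\<close>

lemma pm_hull_edge_weight_one:
  fixes VV :: "'v set" and EE :: "'e set"
  assumes IH: "\<And>VV' EE' (ends' :: 'e \<Rightarrow> 'v set) x'. card VV' + card EE' < card VV + card EE \<Longrightarrow>
      multigraph VV' EE' ends' \<Longrightarrow> edmonds_feasible VV' EE' ends' x' \<Longrightarrow> pm_hull VV' EE' ends' x'"
    and G: "multigraph VV EE ends" and F: "edmonds_feasible VV EE ends x"
    and pos: "\<forall>e\<in>EE. 0 < x e" and e0: "e0 \<in> EE" "x e0 = 1"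
  shows "pm_hull VV EE ends x"
proof -
  define R where "R = ends e0"
  have R: "R \<subseteq> VV" "card R = 2"
    unfolding R_def using G e0(1) by (auto simp: multigraph_ends_subset multigraph_card_ends)
  have fin: "finite EE" using G by (rule multigraph_finite_edges)
  have disjoint: "\<forall>e\<in>EE - {e0}. ends e \<inter> R = {}"
  proof (intro ballI equals0I)
    fix e y assume e: "e \<in> EE - {e0}" and y: "y \<in> ends e \<inter> R"
    have "{e, e0} \<subseteq> incident EE ends y" using e y e0 unfolding incident_def R_def by auto
    then have "sum x {e, e0} \<le> sum x (incident EE ends y)"
      using pos fin by (intro sum_mono2) (auto simp: finite_incident incident_def less_imp_le)
    moreover have "sum x (incident EE ends y) = 1" using F y R(1) by (auto simp: edmonds_feasible_degree)
    moreover have "0 < x e" using pos e by blast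
    ultimately show False using e e0(2) by simp
  qed
  have "card (VV - R) \<le> card VV" using multigraph_finite_vertices[OF G] by (rule card_mono) auto
  then have "card (VV - R) + card (EE - {e0}) < card VV + card EE"
    using card_Diff1_less[OF fin e0(1)] by linarith
  moreover have "multigraph (VV - R) (EE - {e0}) ends"
    by (rule multigraph_subgraph[OF G]) (use disjoint in \<open>auto dest: multigraph_ends_subset[OF G]\<close>)
  moreover have "edmonds_feasible (VV - R) (EE - {e0}) ends x"
    using F _ disjoint by (rule edmonds_feasible_remove_components) (simp add: R_def)
  ultimately have "pm_hull (VV - R) (EE - {e0}) ends x" by (rule IH)
  moreover have "pm_hull R {e0} ends x" using R(2) e0(2) unfolding R_def by (intro pm_hull_single_edge) auto
  ultimately show ?thesis
    using fin e0(1) disjoint by (intro pm_hull_Un_components[of EE "{e0}" ends R]) (auto simp: R_def)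
qed

theorem edmonds_perfect_matching_polytope:
  fixes VV :: "'v set" and EE :: "'e set"
  shows "multigraph VV EE ends \<Longrightarrow> edmonds_feasible VV EE ends x \<Longrightarrow> pm_hull VV EE ends x"
proof (induction "card VV + card EE" arbitrary: VV EE ends x rule: less_induct)
  case less
  note G = less.prems(1) and F = less.prems(2)
  have IH: "\<And>VV' EE' (ends' :: 'e \<Rightarrow> 'v set) x'. card VV' + card EE' < card VV + card EE \<Longrightarrow>
      multigraph VV' EE' ends' \<Longrightarrow> edmonds_feasible VV' EE' ends' x' \<Longrightarrow> pm_hull VV' EE' ends' x'"
    using less.hyps by blast
  have degenerate_case: "pm_hull VV EE ends y"
    if "edmonds_feasible VV EE ends y" "degenerate VV EE ends y" for y
    by (rule pm_hull_degenerate[OF _ G that]) (rule IH)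
  show ?case
  proof (cases "degenerate VV EE ends x \<or> VV = {}")
    case True
    then show ?thesis using degenerate_case[OF F] pm_hull_empty G by blast
  next
    case False
    then have nondeg: "\<not> degenerate VV EE ends x" and V: "VV \<noteq> {}" by auto
    then have pos: "\<forall>e\<in>EE. 0 < x e"
      using edmonds_feasible_nonneg[OF F] unfolding degenerate_def by force
    show ?thesis
    proof (cases "\<exists>e0\<in>EE. x e0 = 1")
      case True
      then obtain e0 where e0: "e0 \<in> EE" "x e0 = 1" by blast
      show ?thesis by (rule pm_hull_edge_weight_one[OF _ G F pos e0]) (rule IH)
    next
      case False
      then have "\<forall>e\<in>EE. x e < 1" using edmonds_feasible_le_1[OF G F] by force
      then obtain d where d: "balanced_direction VV EE ends d"
        using balanced_direction_exists[OF G F _ nondeg V] by blast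
      obtain t1 where t1: "0 < t1" "edmonds_feasible VV EE ends (\<lambda>e. x e + t1 * d e)"
          "degenerate VV EE ends (\<lambda>e. x e + t1 * d e)"
        by (rule edmonds_feasible_perturb_to_degenerate[OF G F nondeg d])
      obtain t2 where t2: "0 < t2" "edmonds_feasible VV EE ends (\<lambda>e. x e + t2 * - d e)"
          "degenerate VV EE ends (\<lambda>e. x e + t2 * - d e)"
        by (rule edmonds_feasible_perturb_to_degenerate[OF G F nondeg balanced_direction_uminus[OF d]])
      show ?thesis
        using pm_hull_between[OF degenerate_case[OF t1(2,3)] degenerate_case[OF t2(2,3)] t1(1) t2(1)] .
    qed
  qed
qed

section \<open>Nonnegative combinations of tours\<close>

definition tour_cone :: "nat \<Rightarrow> real \<Rightarrow> (nat set \<Rightarrow> real) \<Rightarrow> bool" where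
  "tour_cone n s y \<longleftrightarrow> (\<exists>k (c :: nat \<Rightarrow> real) (t :: nat \<Rightarrow> nat set \<Rightarrow> nat).
     (\<forall>i < k. 0 \<le> c i \<and> is_tour n (t i)) \<and> (\<Sum>i<k. c i) = s \<and> (\<forall>e. y e = (\<Sum>i<k. c i * real (t i e))))"

lemma TSP_iff_tour_cone: "y \<in> TSP n \<longleftrightarrow> tour_cone n 1 y"
  unfolding TSP_def tour_cone_def by auto

lemma sum_lessThan_add: "(\<Sum>i<k + l. f i) = (\<Sum>i<k. f i) + (\<Sum>i<l. f (k + i))" for f :: "nat \<Rightarrow> real"
  by (induction l) (simp_all add: add.assoc)

lemma tour_cone_zero: "tour_cone n 0 (\<lambda>_. 0)"
  unfolding tour_cone_def by (intro exI[of _ 0]) auto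

lemma tour_cone_add:
  assumes "tour_cone n s1 y1" "tour_cone n s2 y2"
  shows "tour_cone n (s1 + s2) (\<lambda>e. y1 e + y2 e)"
proof -
  obtain k1 :: nat and c1 t1 where 1: "\<forall>i < k1. 0 \<le> c1 i \<and> is_tour n (t1 i)" "(\<Sum>i<k1. c1 i) = s1"
    "\<forall>e. y1 e = (\<Sum>i<k1. c1 i * real (t1 i e))"
    using assms(1) unfolding tour_cone_def by blast
  obtain k2 :: nat and c2 t2 where 2: "\<forall>i < k2. 0 \<le> c2 i \<and> is_tour n (t2 i)" "(\<Sum>i<k2. c2 i) = s2"
    "\<forall>e. y2 e = (\<Sum>i<k2. c2 i * real (t2 i e))"
    using assms(2) unfolding tour_cone_def by blast
  define c where "c i = (if i < k1 then c1 i else c2 (i - k1))" for i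
  define t where "t i = (if i < k1 then t1 i else t2 (i - k1))" for i
  show ?thesis unfolding tour_cone_def
  proof (intro exI[of _ "k1 + k2"] exI[of _ c] exI[of _ t] conjI allI impI)
    show "0 \<le> c i" "is_tour n (t i)" if "i < k1 + k2" for i
      using that 1(1) 2(1) unfolding c_def t_def by auto
    show "(\<Sum>i<k1 + k2. c i) = s1 + s2" unfolding sum_lessThan_add c_def using 1(2) 2(2) by simp
    show "y1 e + y2 e = (\<Sum>i<k1 + k2. c i * real (t i e))" for e
      unfolding sum_lessThan_add c_def t_def using 1(3) 2(3) by simp
  qed
qed

lemma tour_cone_scale:
  assumes "tour_cone n s y" "0 \<le> a"
  shows "tour_cone n (a * s) (\<lambda>e. a * y e)"
proof -
  obtain k :: nat and c t where "\<forall>i < k. 0 \<le> c i \<and> is_tour n (t i)" "(\<Sum>i<k. c i) = s"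
    "\<forall>e. y e = (\<Sum>i<k. c i * real (t i e))"
    using assms(1) unfolding tour_cone_def by blast
  then show ?thesis unfolding tour_cone_def
    by (intro exI[of _ k] exI[of _ "\<lambda>i. a * c i"] exI[of _ t])
      (use assms(2) in \<open>auto simp: sum_distrib_left mult.assoc\<close>)
qed

lemma tour_cone_sum:
  assumes "finite S" "\<forall>M\<in>S. 0 \<le> p M" "\<forall>M\<in>S. p M \<noteq> 0 \<longrightarrow> y M \<in> TSP n"
  shows "tour_cone n (sum p S) (\<lambda>e. \<Sum>M\<in>S. p M * y M e)"
  using assms
proof (induction S rule: finite_induct)
  case empty
  then show ?case using tour_cone_zero by simp
next
  case (insert M S)
  have "tour_cone n (p M) (\<lambda>e. p M * y M e)"
  proof (cases "p M = 0")
    case True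
    then show ?thesis using tour_cone_zero by simp
  next
    case False
    then have "tour_cone n 1 (y M)" using insert.prems TSP_iff_tour_cone by auto
    from tour_cone_scale[OF this, of "p M"] show ?thesis using insert.prems by simp
  qed
  then show ?case using tour_cone_add[of n "p M" _ "sum p S"] insert by simp
qed

section \<open>Two-thirds-uniform points\<close>

lemma finite_E: "finite (E n)"
  by (rule finite_subset[of _ "Pow (V n)"]) (auto simp: E_def V_def)

lemma finite_cut: "finite (cut n U)"
  using finite_E unfolding cut_def by simp

lemma cut_singleton: "cut n {i} = {e \<in> E n. i \<in> e}"
  unfolding cut_def by (auto simp: Int_insert_right)

lemma multigraph_E_subset: "F \<subseteq> E n \<Longrightarrow> multigraph (V n) F id"
  unfolding multigraph_def E_def V_def by (auto intro: finite_subset)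

lemma incident_id: "F \<subseteq> E n \<Longrightarrow> incident F id i = cut n {i} \<inter> F"
  unfolding incident_def cut_singleton by auto

lemma boundary_id: "F \<subseteq> E n \<Longrightarrow> boundary F id U = cut n U \<inter> F"
  unfolding boundary_def cut_def by auto

context
  fixes n :: nat and z :: "nat set \<Rightarrow> real"
  assumes z: "two_thirds_uniform n z"
begin

definition support :: "nat set set" where
  "support = {e \<in> E n. z e = 2/3}"

lemma support_subset: "support \<subseteq> E n"
  unfolding support_def by auto

lemma z_eq: "z e = 2/3 * of_bool (e \<in> support)"
proof (cases "e \<in> E n")
  case True
  then show ?thesis using z unfolding two_thirds_uniform_def support_def by auto
next
  case False
  then show ?thesis using z unfolding two_thirds_uniform_def SUBT_def support_def by auto
qed

lemma sum_z:
  assumes "finite A"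
  shows "sum z A = 2/3 * card (A \<inter> support)"
proof -
  have "sum z A = 2/3 * (\<Sum>e\<in>A. of_bool (e \<in> support))"
    by (simp add: z_eq sum_distrib_left)
  also have "(\<Sum>e\<in>A. of_bool (e \<in> support)) = real (card (A \<inter> support))"
    using assms by (simp add: Int_def)
  finally show ?thesis .
qed

lemma card_cut_support_ge_3:
  assumes "U \<noteq> {}" "U \<subset> V n"
  shows "3 \<le> card (cut n U \<inter> support)"
proof -
  have "2 \<le> sum z (cut n U)" using z assms unfolding two_thirds_uniform_def SUBT_def by blast
  then show ?thesis using sum_z[OF finite_cut[of n U]] by simp
qed

lemma support_cubic:
  assumes "i \<in> V n"
  shows "card (incident support id i) = 3"
proof -
  have "sum z (cut n {i}) = 2" using z assms unfolding two_thirds_uniform_def SUBT_def by blast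
  then show ?thesis using sum_z[OF finite_cut[of n "{i}"]] incident_id[OF support_subset] by simp
qed

lemma even_n: "even n"
proof -
  have "(\<Sum>i\<in>V n. card (incident support id i)) = 2 * card support"
    using handshake[OF multigraph_E_subset[OF support_subset], of "\<lambda>_. 1::nat"] by simp
  then have "3 * n = 2 * card support" using support_cubic by (simp add: V_def)
  then show ?thesis by presburger
qed

lemma edmonds_feasible_half: "edmonds_feasible (V n) support id (\<lambda>e. z e / 2)"
  unfolding edmonds_feasible_def
proof (intro conjI ballI allI impI)
  show "0 \<le> z e / 2" if "e \<in> support" for e using that unfolding support_def by simp
  show "(\<Sum>e\<in>incident support id i. z e / 2) = 1" if "i \<in> V n" for i
  proof -
    have "incident support id i \<inter> support = incident support id i" unfolding incident_def by auto
    then have "sum z (incident support id i) = 2"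
      using sum_z[OF finite_incident[OF finite_subset[OF support_subset finite_E], of id i]]
        support_cubic[OF that] by simp
    then show ?thesis by (simp add: sum_divide_distrib[symmetric])
  qed
  show "1 \<le> (\<Sum>e\<in>boundary support id U. z e / 2)" if "U \<subseteq> V n" "odd (card U)" for U
  proof -
    have "U \<noteq> {}" "U \<noteq> V n" using that even_n by (auto simp: V_def)
    then have "3 \<le> card (cut n U \<inter> support)" using that by (intro card_cut_support_ge_3) auto
    moreover have "sum z (cut n U \<inter> support) = 2/3 * card (cut n U \<inter> support)"
      using sum_z[of "cut n U \<inter> support"] finite_cut[of n U] by (simp add: Int_assoc)
    ultimately show ?thesis
      unfolding boundary_id[OF support_subset] by (simp add: sum_divide_distrib[symmetric])
  qed
qed

definition matching_point :: "nat set set \<Rightarrow> nat set \<Rightarrow> real" where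
  "matching_point M e = (if e \<in> M then 1 else if e \<in> support then 1/2 else 0)"

lemma sum_matching_point:
  assumes "M \<subseteq> support" "finite A"
  shows "sum (matching_point M) A = (card (A \<inter> M) + card (A \<inter> support)) / 2"
proof -
  have "sum (matching_point M) A = (\<Sum>e\<in>A. (of_bool (e \<in> M) + of_bool (e \<in> support)) / 2)"
    using assms(1) unfolding matching_point_def by (intro sum.cong refl) auto
  also have "\<dots> = (card (A \<inter> M) + card (A \<inter> support)) / 2"
    using assms(2) by (simp add: sum_divide_distrib[symmetric] sum.distrib Int_def)
  finally show ?thesis .
qed

text \<open>A tight cut of the cubic support has odd size by parity, so a perfect matching crosses it.\<close>

lemma perfect_matching_crosses_3_cut:
  assumes M: "perfect_matching (V n) support id M" and U: "U \<subseteq> V n"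
    and three: "card (cut n U \<inter> support) = 3"
  shows "1 \<le> card (cut n U \<inter> M)"
proof -
  have MS: "M \<subseteq> support" using M unfolding perfect_matching_def by simp
  then have ME: "M \<subseteq> E n" using support_subset by blast
  have finU: "finite U" using U finite_subset by (auto simp: V_def)
  have "(\<Sum>v\<in>U. card (incident support id v)) = (\<Sum>v\<in>U. 3)"
    using U support_cubic by (intro sum.cong) auto
  then have "(\<Sum>v\<in>U. card (incident support id v)) = 3 * card U" by simp
  then have "odd (card U)"
    using even_sum_degrees_iff_even_boundary[OF multigraph_E_subset[OF support_subset] finU] three
    by (simp add: boundary_id[OF support_subset])
  moreover have "card (incident M id v) = 1" if "v \<in> U" for v
  proof -
    have "incident M id v = incident support id v \<inter> M" using MS unfolding incident_def by auto
    then show ?thesis using M that U unfolding perfect_matching_def by auto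
  qed
  ultimately have "odd (card (cut n U \<inter> M))"
    using even_sum_degrees_iff_even_boundary[OF multigraph_E_subset[OF ME] finU]
    by (simp add: boundary_id[OF ME])
  then show ?thesis by (cases "card (cut n U \<inter> M)") auto
qed

lemma cyclic_point_matching_point:
  assumes M: "perfect_matching (V n) support id M"
  shows "cyclic_point (1/2) n (matching_point M)"
proof -
  have MS: "M \<subseteq> support" using M unfolding perfect_matching_def by simp
  have cut_M: "card (cut n {i} \<inter> M) = 1" if "i \<in> V n" for i
  proof -
    have "incident support id i \<inter> M = cut n {i} \<inter> M" using MS incident_id[OF support_subset] by auto
    then show ?thesis using M that unfolding perfect_matching_def by auto
  qed
  have cut_S: "card (cut n {i} \<inter> support) = 3" if "i \<in> V n" for i
    using support_cubic[OF that] incident_id[OF support_subset] by simp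
  have "matching_point M \<in> SUBT n"
    unfolding SUBT_def
  proof (intro CollectI conjI allI ballI impI)
    show "matching_point M e = 0" if "e \<notin> E n" for e
      using that MS support_subset unfolding matching_point_def by auto
    show "0 \<le> matching_point M e" "matching_point M e \<le> 1" for e
      unfolding matching_point_def by auto
    show "sum (matching_point M) (cut n {i}) = 2" if "i \<in> V n" for i
      using cut_M[OF that] cut_S[OF that] by (simp add: sum_matching_point[OF MS finite_cut])
    show "2 \<le> sum (matching_point M) (cut n U)" if "U \<noteq> {} \<and> U \<subset> V n" for U
      using card_cut_support_ge_3[of U] perfect_matching_crosses_3_cut[OF M, of U] that
      unfolding sum_matching_point[OF MS finite_cut] by (cases "card (cut n U \<inter> support) = 3") auto
  qed
  moreover have "{e \<in> cut n {i}. 0 < matching_point M e} = cut n {i} \<inter> support" for i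
    using MS unfolding matching_point_def by auto
  moreover have "\<exists>e\<in>cut n {i}. matching_point M e = 1" if "i \<in> V n" for i
    using cut_M[OF that] unfolding matching_point_def by (metis card_1_singletonE IntD1 IntD2 insertI1)
  ultimately show ?thesis
    using cut_S unfolding cyclic_point_def by (auto simp: matching_point_def)
qed

lemma step_function_matching_point:
  fixes a b :: real
  assumes "M \<subseteq> support"
  shows "(if matching_point M e = 1 then a else if 0 < matching_point M e \<and> matching_point M e < 1 then b else 0)
    = b * of_bool (e \<in> support) + (a - b) * of_bool (e \<in> M)"
  using assms unfolding matching_point_def by auto

lemma average_step_functions:
  fixes a b :: real
  assumes "sum p (Pow support) = 1" "\<forall>e\<in>support. z e / 2 = (\<Sum>M\<in>Pow support. p M * of_bool (e \<in> M))"
  shows "(\<Sum>M\<in>Pow support. p M * (b * of_bool (e \<in> support) + (a - b) * of_bool (e \<in> M)))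
    = (3/2 * b + (a - b) / 2) * z e"
proof -
  have "(\<Sum>M\<in>Pow support. p M * (b * of_bool (e \<in> support) + (a - b) * of_bool (e \<in> M)))
      = (\<Sum>M\<in>Pow support. b * of_bool (e \<in> support) * p M + (a - b) * (p M * of_bool (e \<in> M)))"
    by (intro sum.cong refl) (simp add: algebra_simps del: of_bool_eq)
  also have "\<dots> = b * of_bool (e \<in> support) * sum p (Pow support)
      + (a - b) * (\<Sum>M\<in>Pow support. p M * of_bool (e \<in> M))"
    by (simp only: sum.distrib sum_distrib_left)
  finally have sum_eq: "(\<Sum>M\<in>Pow support. p M * (b * of_bool (e \<in> support) + (a - b) * of_bool (e \<in> M)))
      = b * of_bool (e \<in> support) * sum p (Pow support)
      + (a - b) * (\<Sum>M\<in>Pow support. p M * of_bool (e \<in> M))" .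
  moreover have marginal: "(\<Sum>M\<in>Pow support. p M * of_bool (e \<in> M)) = z e / 2"
  proof (cases "e \<in> support")
    case False
    then have "\<forall>M\<in>Pow support. p M * of_bool (e \<in> M) = 0" by auto
    then show ?thesis using False z_eq[of e] by (simp add: sum.neutral)
  qed (use assms(2) in simp)
  ultimately show ?thesis
    unfolding sum_eq marginal assms(1) by (cases "e \<in> support") (simp_all add: z_eq field_simps)
qed

end

theorem mainTheorem5:
  fixes \<epsilon> \<delta> :: real
  assumes "\<epsilon> \<ge> 0" and "\<delta> \<ge> 0"
  assumes hyp: "\<And>n x. n \<ge> 3 \<Longrightarrow> cyclic_point (1/2) n x \<Longrightarrow>
      (\<lambda>e. if x e = 1 then 3/2 - \<epsilon>
            else if 0 < x e \<and> x e < 1 then 3/4 - \<delta> else 0) \<in> TSP n"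
  shows "\<forall>n \<ge> 3. \<forall>z. two_thirds_uniform n z \<longrightarrow>
      (\<lambda>e. (3/2 - \<epsilon>/2 - \<delta>) * z e) \<in> TSP n"
proof (intro allI impI)
  fix n :: nat and z assume n: "3 \<le> n" and z: "two_thirds_uniform n z"
  let ?S = "support n z" and ?y = "\<lambda>M e. if matching_point n z M e = 1 then 3/2 - \<epsilon>
    else if 0 < matching_point n z M e \<and> matching_point n z M e < 1 then 3/4 - \<delta> else 0"
  have "pm_hull (V n) ?S id (\<lambda>e. z e / 2)"
    using z by (intro edmonds_perfect_matching_polytope multigraph_E_subset support_subset edmonds_feasible_half)
  then obtain p where p: "\<forall>M. 0 \<le> p M" "\<forall>M\<in>Pow ?S. p M \<noteq> 0 \<longrightarrow> perfect_matching (V n) ?S id M"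
    "sum p (Pow ?S) = 1" "\<forall>e\<in>?S. z e / 2 = (\<Sum>M\<in>Pow ?S. p M * of_bool (e \<in> M))"
    by (rule pm_hullE)
  have "tour_cone n (sum p (Pow ?S)) (\<lambda>e. \<Sum>M\<in>Pow ?S. p M * ?y M e)"
    using p(1,2) hyp[OF n cyclic_point_matching_point[OF z]] finite_subset[OF support_subset[OF z] finite_E]
    by (intro tour_cone_sum) auto
  moreover have "(\<Sum>M\<in>Pow ?S. p M * ?y M e) = (3/2 - \<epsilon>/2 - \<delta>) * z e" for e
    using average_step_functions[OF z p(3,4), of "3/4 - \<delta>" e "3/2 - \<epsilon>"]
    by (simp add: step_function_matching_point[OF z] field_simps)
  ultimately show "(\<lambda>e. (3/2 - \<epsilon>/2 - \<delta>) * z e) \<in> TSP n"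
    unfolding TSP_iff_tour_cone using p(3) by simp
qed

end
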